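(* Let $\mathcal{X}$ be finite, let $U=(U_n)_{n\ge1}$ be a channel sequence with $U_n:\mathcal{X}^n\rightsquigarrow\mathcal{Y}_n$ ($\mathcal{Y}_n$ countable), let $f_n:\mathcal{Y}_n\to\mathcal{Z}_n$ be functions, and let $V=(V_n)$ with $V_n=f_n(U_n):\mathcal{X}^n\rightsquigarrow\mathcal{Z}_n$. Let $\Phi_n=\log_2\max_{z\in\mathcal{Z}_n}|f_n^{-1}(z)|$ and suppose $\Phi_n/n\to0$. Then $\mathbf{C}(U)=\mathbf{C}(V)$. If, furthermore, at least one of $\mathbf{I}(U)$, $\mathbf{I}(V)$ exists, then both exist and $\mathbf{I}(U)=\mathbf{I}(V)$. Moreover, $U$ is strictly information stable if and only if $V$ is strictly information stable.
   Context: A channel $W:\mathcal{A}\rightsquigarrow\mathcal{B}$ is a family of probability distributions $W(\cdot|a)$ on $\mathcal{B}$; for a function $f:\mathcal{B}\to\mathcal{C}$, $f(W):\mathcal{A}\rightsquigarrow\mathcal{C}$ is the channel $f(W)(c|a)=\sum_{b\in f^{-1}(c)}W(b|a)$. For a distribution $p$: $p\circ W(a,b)=p(a)W(b|a)$, $p\bullet W(b)=\sum_a p\circ W(a,b)$; $\mathbf{i}(W,p,a,b)=\log_2\frac{W(b|a)}{p\bullet W(b)}$ if $W(b|a)>0$ and $p\bullet W(b)>0$, else $0$; $\mathbf{I}(W,p)=\mathbb{E}_{p\circ W}[\mathbf{i}]$, $\mathbf{I}(W)=\max_p\mathbf{I}(W,p)$. For a channel sequence $V$, $\mathbf{I}(V)=\lim_n\mathbf{I}(V_n)/n$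 when the limit exists. A $(W,M,\varepsilon)$-coding scheme: $M$ distinct inputs $x_1,\dots,x_M$ and disjoint output sets $\mathcal{R}_1,\dots,\mathcal{R}_M$ with $\sum_{y\notin\mathcal{R}_i}W(y|x_i)\le\varepsilon$ for all $i$. $R\ge0$ is achievable if for each $\varepsilon>0$ there is $n_0$ with a $(V_n,\lceil2^{nR}\rceil,\varepsilon)$-coding scheme for all $n\ge n_0$; $\mathbf{C}(V)$ is the supremum of achievable rates. $V$ is strictly information stable if $\mathbf{I}(V)$ exists and there are distributions $p^*_n$ on $\mathcal{X}^n$ with $\lim_n\Pr_{p^*_n\circ V_n}\big[|\mathbf{i}(V_n,p^*_n,x,y)/n-\mathbf{I}(V)|>\delta\big]=0$ for every $\delta>0$. *)

theory Defs
  imports "HOL-Analysis.Analysis"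
begin

text \<open>Channels W : A ~> B are represented as functions W :: 'a => 'b => real,
  W a b = W(b|a), together with an explicit input set A and output set B.\<close>

definition is_channel :: "('a \<Rightarrow> 'b \<Rightarrow> real) \<Rightarrow> 'a set \<Rightarrow> 'b set \<Rightarrow> bool" where
  "is_channel W A B \<longleftrightarrow> countable B \<and>
     (\<forall>a\<in>A. (\<forall>b. 0 \<le> W a b) \<and> (\<forall>b. b \<notin> B \<longrightarrow> W a b = 0) \<and> (W a has_sum 1) B)"

definition image_channel :: "('b \<Rightarrow> 'c) \<Rightarrow> 'b set \<Rightarrow> ('a \<Rightarrow> 'b \<Rightarrow> real) \<Rightarrow> 'a \<Rightarrow> 'c \<Rightarrow> real" where
  "image_channel f B W a c = (\<Sum>\<^sub>\<infinity>b\<in>{b\<in>B. f b = c}. W a b)"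

definition is_dist :: "('a \<Rightarrow> real) \<Rightarrow> 'a set \<Rightarrow> bool" where
  "is_dist p A \<longleftrightarrow> (\<forall>a\<in>A. 0 \<le> p a) \<and> sum p A = 1"

definition out_dist :: "('a \<Rightarrow> 'b \<Rightarrow> real) \<Rightarrow> ('a \<Rightarrow> real) \<Rightarrow> 'a set \<Rightarrow> 'b \<Rightarrow> real" where
  "out_dist W p A b = (\<Sum>a\<in>A. p a * W a b)"

definition info_dens :: "('a \<Rightarrow> 'b \<Rightarrow> real) \<Rightarrow> ('a \<Rightarrow> real) \<Rightarrow> 'a set \<Rightarrow> 'a \<Rightarrow> 'b \<Rightarrow> real" where
  "info_dens W p A a b =
     (if W a b > 0 \<and> out_dist W p A b > 0 then log 2 (W a b / out_dist W p A b) else 0)"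

definition mutual_info :: "('a \<Rightarrow> 'b \<Rightarrow> real) \<Rightarrow> ('a \<Rightarrow> real) \<Rightarrow> 'a set \<Rightarrow> 'b set \<Rightarrow> real" where
  "mutual_info W p A B = (\<Sum>\<^sub>\<infinity>(a,b)\<in>A \<times> B. p a * W a b * info_dens W p A a b)"

text \<open>I(W) = max over input distributions (written as Sup; the max is attained).\<close>
definition max_info :: "('a \<Rightarrow> 'b \<Rightarrow> real) \<Rightarrow> 'a set \<Rightarrow> 'b set \<Rightarrow> real" where
  "max_info W A B = Sup {mutual_info W p A B | p. is_dist p A}"

definition inputs :: "nat \<Rightarrow> 'x list set" where
  "inputs n = {xs. length xs = n}"

definition info_rate_exists :: "(nat \<Rightarrow> 'x list \<Rightarrow> 'b \<Rightarrow> real) \<Rightarrow> (nat \<Rightarrow> 'b set) \<Rightarrow> bool" where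
  "info_rate_exists V B \<longleftrightarrow> convergent (\<lambda>n. max_info (V n) (inputs n) (B n) / real n)"

definition info_rate :: "(nat \<Rightarrow> 'x list \<Rightarrow> 'b \<Rightarrow> real) \<Rightarrow> (nat \<Rightarrow> 'b set) \<Rightarrow> real" where
  "info_rate V B = lim (\<lambda>n. max_info (V n) (inputs n) (B n) / real n)"

definition coding_scheme :: "('a \<Rightarrow> 'b \<Rightarrow> real) \<Rightarrow> 'a set \<Rightarrow> 'b set \<Rightarrow> nat \<Rightarrow> real \<Rightarrow> bool" where
  "coding_scheme W A B M \<epsilon> \<longleftrightarrow> (\<exists>(x :: nat \<Rightarrow> 'a) (R :: nat \<Rightarrow> 'b set).
      inj_on x {..<M} \<and> (\<forall>i<M. x i \<in> A \<and> R i \<subseteq> B) \<and> disjoint_family_on R {..<M} \<and>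
      (\<forall>i<M. (\<Sum>\<^sub>\<infinity>y\<in>B - R i. W (x i) y) \<le> \<epsilon>))"

definition achievable :: "(nat \<Rightarrow> 'x list \<Rightarrow> 'b \<Rightarrow> real) \<Rightarrow> (nat \<Rightarrow> 'b set) \<Rightarrow> real \<Rightarrow> bool" where
  "achievable V B R \<longleftrightarrow> 0 \<le> R \<and> (\<forall>\<epsilon>>0. \<exists>n0. \<forall>n\<ge>n0.
      coding_scheme (V n) (inputs n) (B n) (nat \<lceil>2 powr (real n * R)\<rceil>) \<epsilon>)"

definition capacity :: "(nat \<Rightarrow> 'x list \<Rightarrow> 'b \<Rightarrow> real) \<Rightarrow> (nat \<Rightarrow> 'b set) \<Rightarrow> real" where
  "capacity V B = Sup {R. achievable V B R}"

definition strictly_info_stable :: "(nat \<Rightarrow> 'x list \<Rightarrow> 'b \<Rightarrow> real) \<Rightarrow> (nat \<Rightarrow> 'b set) \<Rightarrow> bool" where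
  "strictly_info_stable V B \<longleftrightarrow> info_rate_exists V B \<and>
     (\<exists>p :: nat \<Rightarrow> 'x list \<Rightarrow> real. (\<forall>n. is_dist (p n) (inputs n)) \<and>
        (\<forall>\<delta>>0. (\<lambda>n. \<Sum>\<^sub>\<infinity>(x,y)\<in>{(x,y)\<in>inputs n \<times> B n.
              \<bar>info_dens (V n) (p n) (inputs n) x y / real n - info_rate V B\<bar> > \<delta>}.
              p n x * V n x y) \<longlonglongrightarrow> 0))"

definition Phi :: "('b \<Rightarrow> 'c) \<Rightarrow> 'b set \<Rightarrow> real" where
  "Phi f B = log 2 (real (Max ((\<lambda>z. card {y\<in>B. f y = z}) ` (f ` B))))"

end

theory Submission
  imports Defs
begin

(*
  Merging outputs along the fibres of f_n changes little because every fibre has at most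
  K_n = 2^Phi_n elements and Phi_n = o(n). For a pair (x, y) of positive probability,
    i_U(x, y) - i_V(x, f y) = log (U(y|x) / V(f y|x)) - log (P_U(y) / P_V(f y)),
  where P_U, P_V are the output distributions and both logarithms are nonpositive.
  Averaged, this difference is the information lost by merging: it is nonnegative (log-sum
  inequality) and at most log K_n (the entropy of a single fibre), so I(U_n) and I(V_n)
  differ by at most Phi_n and the information rates agree. Pointwise, a gap larger than t
  forces y to carry less than a 2^-t share of its fibre under P_U or under U(.|x), which
  has probability at most 2 K_n 2^-t; so the normalised densities of U and V agree in
  probability and strict information stability transfers in both directions.
  A code for V pulls back to a code for U with the same error. Conversely, the images of
  the decoding sets of a code for U cover every output at most K_n times; colouring the
  codewords with T colours, discarding the heavily confused half and keeping the largest
  colour class gives a code for V with a 1/(2T) fraction of the codewords and extra error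
  4 K_n / T, a rate loss that vanishes because K_n = 2^o(n).
*)

section \<open>Infinite sums over subsets\<close>

lemma has_sum_sum:
  fixes g :: "'i \<Rightarrow> 'a \<Rightarrow> 'b::topological_comm_monoid_add"
  assumes "finite I" and "\<And>i. i \<in> I \<Longrightarrow> (g i has_sum s i) S"
  shows "((\<lambda>y. \<Sum>i\<in>I. g i y) has_sum (\<Sum>i\<in>I. s i)) S"
  using assms by (induction I rule: finite_induct) (auto intro: has_sum_add)

lemma has_sum_diff:
  fixes f g :: "'a \<Rightarrow> 'b::topological_ab_group_add"
  assumes "(f has_sum a) A" and "(g has_sum b) A"
  shows "((\<lambda>x. f x - g x) has_sum (a - b)) A"
proof -
  have "((\<lambda>x. - g x) has_sum - b) A"
    using assms(2) by (simp add: has_sum_uminus)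
  from has_sum_add[OF assms(1) this] show ?thesis by simp
qed

lemma has_sum_sum_fibres:
  fixes g :: "'a \<Rightarrow> 'b::{comm_monoid_add, uniform_space, uniform_topological_group_add}"
  assumes "(g has_sum s) S" and "\<And>z. finite {x\<in>S. h x = z}"
  shows "((\<lambda>z. sum g {x\<in>S. h x = z}) has_sum s) (h ` S)"
proof -
  have "bij_betw (\<lambda>x. (h x, x)) S (Sigma (h ` S) (\<lambda>z. {x\<in>S. h x = z}))"
    by (auto simp: bij_betw_def inj_on_def image_iff)
  then have "((\<lambda>q. g (snd q)) has_sum s) (Sigma (h ` S) (\<lambda>z. {x\<in>S. h x = z}))"
    using has_sum_reindex_bij_betw[of "\<lambda>x. (h x, x)" S _ "\<lambda>q. g (snd q)"] assms(1) by simp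
  then show ?thesis
    by (rule has_sum_Sigma') (use assms(2) in \<open>auto intro: has_sum_finiteI\<close>)
qed

lemma has_sum_restrict:
  fixes g :: "'a \<Rightarrow> 'b::banach"
  assumes "g summable_on Z" and "S \<subseteq> Z"
  shows "((\<lambda>z. if z \<in> S then g z else 0) has_sum infsum g S) Z"
proof -
  have "(g has_sum infsum g S) S"
    using summable_on_subset_banach[OF assms] by simp
  then show ?thesis
    by (rule has_sum_cong_neutral[THEN iffD1, rotated -1]) (use assms(2) in auto)
qed

lemma has_sum_multiplicity:
  fixes g :: "'a \<Rightarrow> real"
  assumes "g summable_on Z" and "finite J" and "\<And>j. j \<in> J \<Longrightarrow> S j \<subseteq> Z"
  shows "((\<lambda>z. real (card {j\<in>J. z \<in> S j}) * g z) has_sum (\<Sum>j\<in>J. infsum g (S j))) Z"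
proof -
  have "((\<lambda>z. \<Sum>j\<in>J. if z \<in> S j then g z else 0) has_sum (\<Sum>j\<in>J. infsum g (S j))) Z"
    using assms by (intro has_sum_sum has_sum_restrict) auto
  moreover have "(\<Sum>j\<in>J. if z \<in> S j then g z else 0) = real (card {j\<in>J. z \<in> S j}) * g z" for z
    using assms(2) by (simp add: sum.If_cases Int_def)
  ultimately show ?thesis by simp
qed

lemma infsum_le_sum_infsum_cover:
  fixes g :: "'a \<Rightarrow> real"
  assumes "g summable_on Z" and "\<And>z. z \<in> Z \<Longrightarrow> 0 \<le> g z"
    and "finite J" and "\<And>j. j \<in> J \<Longrightarrow> S j \<subseteq> Z" and "T \<subseteq> (\<Union>j\<in>J. S j)"
  shows "infsum g T \<le> (\<Sum>j\<in>J. infsum g (S j))"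
proof (rule has_sum_mono[OF has_sum_restrict has_sum_multiplicity])
  show "T \<subseteq> Z" using assms(4,5) by blast
  fix z assume "z \<in> Z"
  moreover have "1 \<le> real (card {j\<in>J. z \<in> S j})" if "z \<in> T"
    using that assms(3,5) by (auto simp: Suc_le_eq card_gt_0_iff)
  ultimately show "(if z \<in> T then g z else 0) \<le> real (card {j\<in>J. z \<in> S j}) * g z"
    using assms(2) mult_right_mono[of 1 "real (card {j\<in>J. z \<in> S j})" "g z"] by auto
qed (use assms in auto)

lemma infsum_le_infsum_Un:
  fixes g :: "'a \<Rightarrow> real"
  assumes "g summable_on Z" and "\<And>z. z \<in> Z \<Longrightarrow> 0 \<le> g z"
    and "S1 \<subseteq> Z" and "S2 \<subseteq> Z" and "T \<subseteq> S1 \<union> S2"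
  shows "infsum g T \<le> infsum g S1 + infsum g S2"
proof -
  have "infsum g T \<le> (\<Sum>b\<in>UNIV. infsum g (if b then S1 else S2))"
    by (rule infsum_le_sum_infsum_cover[OF assms(1,2)]) (use assms(3-5) in auto)
  then show ?thesis by (simp add: UNIV_bool add.commute)
qed

lemma sum_infsum_le_overlap:
  fixes g :: "'a \<Rightarrow> real"
  assumes "g summable_on Z" and "\<And>z. z \<in> Z \<Longrightarrow> 0 \<le> g z"
    and "finite J" and "\<And>j. j \<in> J \<Longrightarrow> S j \<subseteq> Z" and "\<And>z. card {j\<in>J. z \<in> S j} \<le> K"
  shows "(\<Sum>j\<in>J. infsum g (S j)) \<le> K * infsum g Z"
  by (rule has_sum_mono[OF has_sum_multiplicity has_sum_cmult_right[OF has_sum_infsum]])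
     (use assms in \<open>auto intro: mult_right_mono\<close>)

lemma Collect_mem_Times_fst_snd: "{(x, y)\<in>A \<times> B. Q x y} = {s\<in>A \<times> B. Q (fst s) (snd s)}"
  by auto

lemma infsum_deviation_le:
  fixes w a b :: "'a \<Rightarrow> real"
  assumes "w summable_on S" and "\<And>s. s \<in> S \<Longrightarrow> 0 \<le> w s" and "N > 0"
  shows "infsum w {s\<in>S. \<delta> < \<bar>a s / N - c\<bar>}
    \<le> infsum w {s\<in>S. \<delta> / 2 < \<bar>b s / N - c\<bar>} + infsum w {s\<in>S. N * (\<delta> / 2) < \<bar>a s - b s\<bar>}"
proof (rule infsum_le_infsum_Un[OF assms(1,2)])
  have "\<delta> / 2 < \<bar>b / N - c\<bar> \<or> N * (\<delta> / 2) < \<bar>a - b\<bar>" if "\<delta> < \<bar>a / N - c\<bar>" for a b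
  proof (rule ccontr)
    assume "\<not> ?thesis"
    moreover have "\<bar>a - b\<bar> = N * \<bar>a / N - b / N\<bar>"
      using assms(3) by (simp add: diff_divide_distrib[symmetric] abs_divide)
    ultimately have "\<bar>a / N - b / N\<bar> \<le> \<delta> / 2" and "\<bar>b / N - c\<bar> \<le> \<delta> / 2"
      using assms(3) by auto
    then show False
      using that abs_triangle_ineq[of "a / N - b / N" "b / N - c"] by simp
  qed
  then show "{s\<in>S. \<delta> < \<bar>a s / N - c\<bar>} \<subseteq> {s\<in>S. \<delta> / 2 < \<bar>b s / N - c\<bar>} \<union> {s\<in>S. N * (\<delta> / 2) < \<bar>a s - b s\<bar>}"
    by blast
qed auto

section \<open>Elementary inequalities\<close>

lemma mult_ln_div_le:
  fixes q Q N :: real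
  assumes "0 \<le> q" and "0 < Q" and "0 < N"
  shows "q * ln (Q / q) \<le> q * ln N + (Q / N - q)"
proof (cases "q = 0")
  case False
  then have q: "0 < q" using assms(1) by simp
  have "q * ln (Q / (q * N)) \<le> q * (Q / (q * N) - 1)"
    using q assms(2,3) by (intro mult_left_mono ln_le_minus_one) auto
  moreover have "ln (Q / (q * N)) = ln (Q / q) - ln N"
    using q assms(2,3) by (simp add: ln_div ln_mult)
  moreover have "q * (Q / (q * N) - 1) = Q / N - q"
    using q assms(3) by (simp add: field_simps)
  ultimately show ?thesis
    by (simp add: right_diff_distrib)
qed (use assms in simp)

lemma entropy_le_log_card:
  fixes q :: "'a \<Rightarrow> real"
  assumes fin: "finite F" and nonneg: "\<And>y. y \<in> F \<Longrightarrow> 0 \<le> q y"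
  shows "(\<Sum>y\<in>F. q y * log 2 (sum q F / q y)) \<le> sum q F * log 2 (card F)"
proof (cases "sum q F > 0")
  case False
  then have "\<forall>y\<in>F. q y = 0"
    using fin nonneg sum_nonneg_eq_0_iff by (metis antisym_conv2 sum_nonneg)
  then show ?thesis by simp
next
  case True
  define N where "N = real (card F)"
  have N: "N > 0"
    using True fin by (auto simp: N_def card_gt_0_iff)
  have "(\<Sum>y\<in>F. q y * ln (sum q F / q y)) \<le> (\<Sum>y\<in>F. q y * ln N + (sum q F / N - q y))"
    using nonneg True N by (intro sum_mono mult_ln_div_le) auto
  also have "\<dots> = sum q F * ln N"
    using N by (simp add: sum.distrib sum_subtractf sum_distrib_right[symmetric] N_def)
  finally show ?thesis
    by (simp add: log_def sum_divide_distrib[symmetric] divide_right_mono N_def)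
qed

lemma abs_mult_ln_div_le:
  fixes a w q :: real
  assumes "0 < a" and "a \<le> 1" and "0 < w" and "0 < q" and "a * w \<le> q"
  shows "\<bar>a * w * ln (w / q)\<bar> \<le> w + q"
proof -
  have "0 < w / q" using assms by simp
  have "a * w * ln (w / q) \<le> a * w * (w / q)"
    using assms ln_le_minus_one[OF \<open>0 < w / q\<close>] by (intro mult_left_mono) auto
  also have "\<dots> = (a * w / q) * w"
    by simp
  also have "\<dots> \<le> w"
    using assms mult_right_mono[of "a * w / q" 1 w] by simp
  finally have upper: "a * w * ln (w / q) \<le> w" .
  have "1 - q / w \<le> ln (w / q)"
    using ln_le_minus_one[of "q / w"] assms by (simp add: ln_div)
  then have "a * w * (1 - q / w) \<le> a * w * ln (w / q)"
    using assms by (intro mult_left_mono) auto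
  moreover have "a * w * (1 - q / w) = a * w - a * q"
    using assms by (simp add: field_simps)
  moreover have "a * q \<le> q" and "0 \<le> a * w"
    using assms mult_right_mono[of a 1 q] by simp_all
  ultimately have "- q \<le> a * w * ln (w / q)"
    by linarith
  then show ?thesis
    using upper assms by linarith
qed

lemma sum_if_less_le:
  fixes g :: "'a \<Rightarrow> real"
  assumes "card F \<le> K" and "0 \<le> b"
  shows "(\<Sum>y\<in>F. if g y < b then g y else 0) \<le> K * b"
proof -
  have "(\<Sum>y\<in>F. if g y < b then g y else 0) \<le> card F * b"
    using sum_bounded_above[of F "\<lambda>y. if g y < b then g y else 0" b] assms(2) by fastforce
  also have "\<dots> \<le> K * b"
    using assms by (intro mult_right_mono) auto
  finally show ?thesis .
qed

lemma log_div_less_neg_iff: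
  assumes "0 < u" and "0 < v"
  shows "log 2 (u / v) < - t \<longleftrightarrow> u < v * 2 powr - t"
  using assms by (simp add: log_less_iff pos_divide_less_eq mult.commute)

section \<open>Colourings and sparse subsets\<close>

lemma ex_le_average:
  fixes h :: "'a \<Rightarrow> real"
  assumes "finite A" and "A \<noteq> {}"
  shows "\<exists>a\<in>A. real (card A) * h a \<le> sum h A"
proof -
  have "Min (h ` A) \<in> h ` A"
    using assms by (intro Min_in) auto
  then obtain a where "a \<in> A" and "h a = Min (h ` A)"
    by auto
  moreover have "real (card A) * h a \<le> sum h A"
    using sum_bounded_below[of A "h a" h] assms(1) \<open>h a = Min (h ` A)\<close> by simp
  ultimately show ?thesis by blast
qed

lemma ex_ge_average:
  fixes h :: "'a \<Rightarrow> real"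
  assumes "finite A" and "A \<noteq> {}"
  shows "\<exists>a\<in>A. sum h A \<le> real (card A) * h a"
proof -
  have "Max (h ` A) \<in> h ` A"
    using assms by (intro Max_in) auto
  then obtain a where "a \<in> A" and "h a = Max (h ` A)"
    by auto
  moreover have "sum h A \<le> real (card A) * h a"
    using sum_bounded_above[of A h "h a"] assms(1) \<open>h a = Max (h ` A)\<close> by simp
  ultimately show ?thesis by blast
qed

lemma sum_colour_classes:
  fixes g :: "'i \<Rightarrow> real" and T :: nat
  assumes "finite I" and "\<And>j. j \<in> I \<Longrightarrow> c j < T"
  shows "(\<Sum>t<T. \<Sum>j\<in>I. if c j = t then g j else 0) = sum g I"
proof -
  have "(\<Sum>t<T. if c j = t then g j else 0) = g j" if "j \<in> I" for j
    using assms(2)[OF that] by simp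
  then show ?thesis by (subst sum.swap) (rule sum.cong; simp)
qed

lemma ex_light_colour_class:
  fixes g :: "'i \<Rightarrow> real" and T :: nat
  assumes "finite I" and "0 < T" and "\<And>j. j \<in> I \<Longrightarrow> c j < T"
  shows "\<exists>t<T. real T * (\<Sum>j\<in>I. if c j = t then g j else 0) \<le> sum g I"
  using ex_le_average[of "{..<T}" "\<lambda>t. \<Sum>j\<in>I. if c j = t then g j else 0"] assms
    sum_colour_classes[OF assms(1), of c T g] by auto

lemma ex_large_colour_class:
  fixes T :: nat
  assumes "finite I" and "0 < T" and "\<And>j. j \<in> I \<Longrightarrow> c j < T"
  shows "\<exists>t<T. card I \<le> T * card {j\<in>I. c j = t}"
proof -
  obtain t where "t < T" and "real (card I) \<le> real T * real (card {j\<in>I. c j = t})"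
    using ex_ge_average[of "{..<T}" "\<lambda>t. real (card {j\<in>I. c j = t})"] assms
      sum_colour_classes[OF assms(1), of c T "\<lambda>_. 1"]
    by (auto simp: sum.If_cases Int_def conj_commute)
  then show ?thesis
    by (metis of_nat_le_iff of_nat_mult)
qed

lemma sum_offdiag_insert:
  fixes u :: "'i \<Rightarrow> 'i \<Rightarrow> real"
  assumes "finite I" and "a \<notin> I" and sym: "\<And>i j. u i j = u j i"
  shows "(\<Sum>i\<in>insert a I. \<Sum>j\<in>insert a I - {i}. u i j)
    = (\<Sum>i\<in>I. \<Sum>j\<in>I - {i}. u i j) + 2 * (\<Sum>j\<in>I. u a j)"
proof -
  have "(\<Sum>j\<in>insert a I - {i}. u i j) = (\<Sum>j\<in>I - {i}. u i j) + u a i" if "i \<in> I" for i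
  proof -
    have "insert a I - {i} = insert a (I - {i})" using that assms(2) by auto
    then show ?thesis using assms(1,2) sym[of i a] by simp
  qed
  then have "(\<Sum>i\<in>I. \<Sum>j\<in>insert a I - {i}. u i j) = (\<Sum>i\<in>I. \<Sum>j\<in>I - {i}. u i j) + (\<Sum>j\<in>I. u a j)"
    by (simp add: sum.distrib)
  moreover have "insert a I - {a} = I" using assms(2) by auto
  ultimately show ?thesis using assms(1,2) by simp
qed

lemma ex_colouring_light_monochromatic:
  fixes u :: "'i \<Rightarrow> 'i \<Rightarrow> real" and T :: nat
  assumes "finite I" and "T > 0" and sym: "\<And>i j. u i j = u j i"
  shows "\<exists>c. (\<forall>i. c i < T) \<and>
    real T * (\<Sum>i\<in>I. \<Sum>j\<in>I - {i}. if c j = c i then u i j else 0) \<le> (\<Sum>i\<in>I. \<Sum>j\<in>I - {i}. u i j)"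
  using assms(1)
proof (induction I rule: finite_induct)
  case empty
  show ?case using assms(2) by (intro exI[of _ "\<lambda>_. 0"]) auto
next
  case (insert a I)
  then obtain c where c: "\<forall>i. c i < T"
    and light: "real T * (\<Sum>i\<in>I. \<Sum>j\<in>I - {i}. if c j = c i then u i j else 0) \<le> (\<Sum>i\<in>I. \<Sum>j\<in>I - {i}. u i j)"
    by blast
  \<comment> \<open>give \<open>a\<close> the colour class that is lightest from its point of view\<close>
  obtain t where t: "t < T" and light_a: "real T * (\<Sum>j\<in>I. if c j = t then u a j else 0) \<le> (\<Sum>j\<in>I. u a j)"
    using ex_light_colour_class[OF insert.hyps(1) assms(2), of c "u a"] c by auto
  define c' where "c' = c(a := t)"
  have "(\<Sum>i\<in>insert a I. \<Sum>j\<in>insert a I - {i}. if c' j = c' i then u i j else 0)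
    = (\<Sum>i\<in>I. \<Sum>j\<in>I - {i}. if c' j = c' i then u i j else 0) + 2 * (\<Sum>j\<in>I. if c' j = c' a then u a j else 0)"
    using insert.hyps by (intro sum_offdiag_insert) (auto simp: sym)
  also have "(\<Sum>i\<in>I. \<Sum>j\<in>I - {i}. if c' j = c' i then u i j else 0) = (\<Sum>i\<in>I. \<Sum>j\<in>I - {i}. if c j = c i then u i j else 0)"
    using insert.hyps by (intro sum.cong refl) (auto simp: c'_def)
  also have "(\<Sum>j\<in>I. if c' j = c' a then u a j else 0) = (\<Sum>j\<in>I. if c j = t then u a j else 0)"
    using insert.hyps by (intro sum.cong refl) (auto simp: c'_def)
  finally show ?case
    using light light_a c t insert.hyps sum_offdiag_insert[OF insert.hyps sym]
    by (intro exI[of _ c']) (auto simp: c'_def distrib_left)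
qed

lemma markov_count:
  fixes d :: "'i \<Rightarrow> real" and a :: real
  assumes "finite I" and "\<And>i. i \<in> I \<Longrightarrow> 0 \<le> d i" and "sum d I \<le> real (card I) * a" and "a > 0"
  shows "card I \<le> 2 * card {i\<in>I. d i \<le> 2 * a}"
proof -
  define G where "G = {i\<in>I. d i \<le> 2 * a}"
  have "real (card (I - G)) * (2 * a) \<le> sum d (I - G)"
    using sum_bounded_below[of "I - G" "2 * a" d] by (force simp: G_def)
  also have "\<dots> \<le> sum d I"
    using assms(1,2) by (intro sum_mono2) auto
  finally have "(2 * real (card (I - G))) * a \<le> real (card I) * a"
    using assms(3) by (simp add: mult_ac)
  then have "2 * real (card (I - G)) \<le> card I"
    using assms(4) by simp
  moreover have "card (I - G) = card I - card G" and "card G \<le> card I"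
    using assms(1) by (auto simp: G_def card_Diff_subset card_mono)
  ultimately show ?thesis unfolding G_def[symmetric] by linarith
qed

lemma sum_offdiag_sym_le:
  fixes w :: "'i \<Rightarrow> 'i \<Rightarrow> real" and K :: real
  assumes "finite I" and "\<And>i j. 0 \<le> w i j" and "\<And>i. i \<in> I \<Longrightarrow> (\<Sum>j\<in>I. w i j) \<le> K"
  shows "(\<Sum>i\<in>I. \<Sum>j\<in>I - {i}. w i j + w j i) \<le> real (card I) * (2 * K)"
proof -
  have "(\<Sum>i\<in>I. \<Sum>j\<in>I - {i}. w i j + w j i) \<le> (\<Sum>i\<in>I. \<Sum>j\<in>I. w i j + w j i)"
    using assms(1,2) by (intro sum_mono sum_mono2) (auto intro: add_nonneg_nonneg)
  also have "\<dots> = 2 * (\<Sum>i\<in>I. \<Sum>j\<in>I. w i j)"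
    by (simp add: sum.distrib sum.swap[of "\<lambda>i j. w j i"])
  also have "\<dots> \<le> real (card I) * (2 * K)"
    using sum_bounded_above[of I "\<lambda>i. \<Sum>j\<in>I. w i j" K] assms(3) by simp
  finally show ?thesis .
qed

lemma ex_large_sparse_subset:
  fixes w :: "'i \<Rightarrow> 'i \<Rightarrow> real" and T :: nat
  assumes fin: "finite I" and w_nonneg: "\<And>i j. 0 \<le> w i j"
    and row: "\<And>i. i \<in> I \<Longrightarrow> (\<Sum>j\<in>I. w i j) \<le> K" and "T > 0" and "K > 0"
  shows "\<exists>S\<subseteq>I. card I \<le> 2 * T * card S \<and> (\<forall>i\<in>S. real T * (\<Sum>j\<in>S - {i}. w i j) \<le> 4 * K)"
proof -
  define u where "u i j = w i j + w j i" for i j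
  obtain c where c: "\<forall>i. c i < T"
    and light: "real T * (\<Sum>i\<in>I. \<Sum>j\<in>I - {i}. if c j = c i then u i j else 0) \<le> (\<Sum>i\<in>I. \<Sum>j\<in>I - {i}. u i j)"
    using ex_colouring_light_monochromatic[OF fin \<open>T > 0\<close>, of u] by (auto simp: u_def)
  define d where "d i = real T * (\<Sum>j\<in>I - {i}. if c j = c i then u i j else 0)" for i
  have d_nonneg: "0 \<le> d i" for i
    unfolding d_def u_def using w_nonneg by (intro mult_nonneg_nonneg sum_nonneg) (auto intro: add_nonneg_nonneg)
  have "sum d I \<le> card I * (2 * K)"
    using light sum_offdiag_sym_le[of I w K, OF fin w_nonneg row]
    unfolding d_def u_def sum_distrib_left[symmetric] by linarith
  then have G: "card I \<le> 2 * card {i\<in>I. d i \<le> 4 * K}"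
    using markov_count[of I d "2 * K"] fin d_nonneg \<open>K > 0\<close> by (simp add: mult.assoc[symmetric])
  define G where "G = {i\<in>I. d i \<le> 4 * K}"
  obtain t where "t < T" and big: "card G \<le> T * card {i\<in>G. c i = t}"
    using ex_large_colour_class[of G T c] fin c \<open>T > 0\<close> by (auto simp: G_def)
  define S where "S = {i\<in>G. c i = t}"
  have "card I \<le> 2 * T * card S"
    using G big unfolding G_def[symmetric] S_def by (simp add: mult.assoc)
  moreover have "real T * (\<Sum>j\<in>S - {i}. w i j) \<le> 4 * K" if "i \<in> S" for i
  proof -
    have "(\<Sum>j\<in>S - {i}. w i j) \<le> (\<Sum>j\<in>S - {i}. if c j = c i then u i j else 0)"
      using that w_nonneg by (intro sum_mono) (auto simp: S_def u_def)
    also have "\<dots> \<le> (\<Sum>j\<in>I - {i}. if c j = c i then u i j else 0)"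
      using fin w_nonneg by (intro sum_mono2) (auto simp: S_def G_def u_def)
    finally have "real T * (\<Sum>j\<in>S - {i}. w i j) \<le> d i"
      unfolding d_def by (simp add: mult_left_mono)
    then show ?thesis
      using that by (simp add: S_def G_def)
  qed
  moreover have "S \<subseteq> I" by (auto simp: S_def G_def)
  ultimately show ?thesis by blast
qed

section \<open>Channels with an input distribution\<close>

locale channel_input =
  fixes W :: "'a \<Rightarrow> 'b \<Rightarrow> real" and A :: "'a set" and B :: "'b set" and p :: "'a \<Rightarrow> real"
  assumes finite_A: "finite A" and channel: "is_channel W A B" and dist: "is_dist p A"
begin

lemma W_nonneg: "x \<in> A \<Longrightarrow> 0 \<le> W x y"
  using channel by (simp add: is_channel_def)

lemma W_has_sum: "x \<in> A \<Longrightarrow> (W x has_sum 1) B"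
  using channel by (simp add: is_channel_def)

lemma p_nonneg: "x \<in> A \<Longrightarrow> 0 \<le> p x"
  using dist by (simp add: is_dist_def)

lemma p_le_1: "x \<in> A \<Longrightarrow> p x \<le> 1"
  using member_le_sum[of x A p] p_nonneg finite_A dist by (simp add: is_dist_def)

lemma out_dist_nonneg: "0 \<le> out_dist W p A y"
  unfolding out_dist_def by (intro sum_nonneg) (simp add: p_nonneg W_nonneg)

lemma mult_le_out_dist: "x \<in> A \<Longrightarrow> p x * W x y \<le> out_dist W p A y"
  unfolding out_dist_def by (rule member_le_sum) (auto simp: p_nonneg W_nonneg finite_A)

lemma out_dist_has_sum: "(out_dist W p A has_sum 1) B"
proof -
  have "((\<lambda>y. \<Sum>x\<in>A. p x * W x y) has_sum (\<Sum>x\<in>A. p x * 1)) B"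
    by (intro has_sum_sum finite_A has_sum_cmult_right W_has_sum)
  then show ?thesis
    using dist by (simp add: out_dist_def[abs_def] is_dist_def)
qed

lemma joint_has_sum: "((\<lambda>(x, y). p x * W x y) has_sum 1) (A \<times> B)"
proof -
  have row: "((\<lambda>y. p x * W x y) has_sum p x) B" if "x \<in> A" for x
    using has_sum_cmult_right[OF W_has_sum[OF that], of "p x"] by simp
  have "(\<lambda>(x, y). p x * W x y) summable_on Sigma A (\<lambda>_. B)"
    by (rule summable_on_SigmaI[where g = p]) (use row finite_A W_nonneg p_nonneg in auto)
  then have "((\<lambda>(x, y). p x * W x y) has_sum sum p A) (Sigma A (\<lambda>_. B))"
    by (intro has_sum_SigmaI[where g = p]) (use row finite_A in auto)
  then show ?thesis
    using dist by (simp add: is_dist_def)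
qed

lemma info_term_bound:
  assumes x: "x \<in> A"
  shows "\<bar>p x * W x y * info_dens W p A x y\<bar> \<le> 2 * (W x y + out_dist W p A y)"
proof (cases "0 < W x y \<and> 0 < out_dist W p A y \<and> 0 < p x")
  case False
  then have "p x * W x y * info_dens W p A x y = 0"
    using p_nonneg[OF x] W_nonneg[OF x, of y] by (auto simp: info_dens_def)
  then have "\<bar>p x * W x y * info_dens W p A x y\<bar> = 0"
    by simp
  then show ?thesis
    using out_dist_nonneg[of y] W_nonneg[OF x, of y] by (simp only:) simp
next
  case True
  have "\<bar>p x * W x y * ln (W x y / out_dist W p A y)\<bar> \<le> W x y + out_dist W p A y"
    using True p_le_1[OF x] mult_le_out_dist[OF x] by (intro abs_mult_ln_div_le) auto
  then have "\<bar>p x * W x y * ln (W x y / out_dist W p A y)\<bar> / ln 2 \<le> (W x y + out_dist W p A y) / (1 / 2)"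
    using True ln2_ge_two_thirds by (intro frac_le) auto
  then show ?thesis
    using True by (simp add: info_dens_def log_def abs_divide)
qed

lemma info_term_bound_has_sum:
  "((\<lambda>(x, y). 2 * (W x y + out_dist W p A y)) has_sum (4 * card A)) (A \<times> B)"
proof -
  have row: "((\<lambda>y. 2 * (W x y + out_dist W p A y)) has_sum 4) B" if "x \<in> A" for x
    using has_sum_cmult_right[OF has_sum_add[OF W_has_sum[OF that] out_dist_has_sum], of 2] by simp
  have "(\<lambda>(x, y). 2 * (W x y + out_dist W p A y)) summable_on Sigma A (\<lambda>_. B)"
    by (rule summable_on_SigmaI[where g = "\<lambda>_. 4"]) (use row finite_A W_nonneg out_dist_nonneg in auto)
  then have "((\<lambda>(x, y). 2 * (W x y + out_dist W p A y)) has_sum (\<Sum>x\<in>A. 4)) (Sigma A (\<lambda>_. B))"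
    by (intro has_sum_SigmaI[where g = "\<lambda>_. 4"]) (use row finite_A in auto)
  then show ?thesis by (simp add: mult.commute)
qed

lemma mutual_info_summable: "(\<lambda>(x, y). p x * W x y * info_dens W p A x y) summable_on (A \<times> B)"
proof -
  have "(\<lambda>z. norm ((\<lambda>(x, y). 2 * (W x y + out_dist W p A y)) z)) summable_on (A \<times> B)"
    using info_term_bound_has_sum summable_on_def summable_on_iff_abs_summable_on_real by blast
  then have "(\<lambda>z. norm ((\<lambda>(x, y). p x * W x y * info_dens W p A x y) z)) summable_on (A \<times> B)"
    by (rule Infinite_Sum.abs_summable_on_comparison_test)
       (auto simp del: abs_mult simp add: order_trans[OF info_term_bound] out_dist_nonneg W_nonneg)
  then show ?thesis
    using summable_on_iff_abs_summable_on_real by blast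
qed

lemma mutual_info_le_card: "mutual_info W p A B \<le> 4 * card A"
proof -
  have "mutual_info W p A B \<le> infsum (\<lambda>(x, y). 2 * (W x y + out_dist W p A y)) (A \<times> B)"
    unfolding mutual_info_def
    by (rule infsum_mono[OF mutual_info_summable has_sum_imp_summable[OF info_term_bound_has_sum]])
       (clarsimp, metis abs_le_D1 info_term_bound distrib_left)
  then show ?thesis
    using info_term_bound_has_sum infsumI by fastforce
qed

end

definition info_dev_prob :: "('a \<Rightarrow> 'b \<Rightarrow> real) \<Rightarrow> ('a \<Rightarrow> real) \<Rightarrow> 'a set \<Rightarrow> 'b set \<Rightarrow> real \<Rightarrow> real \<Rightarrow> real \<Rightarrow> real" where
  "info_dev_prob W p A B N c \<delta> =
    (\<Sum>\<^sub>\<infinity>(x, y)\<in>{(x, y)\<in>A \<times> B. \<delta> < \<bar>info_dens W p A x y / N - c\<bar>}. p x * W x y)"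

lemma info_dev_prob_nonneg:
  "is_channel W A B \<Longrightarrow> is_dist p A \<Longrightarrow> 0 \<le> info_dev_prob W p A B N c \<delta>"
  unfolding info_dev_prob_def by (rule infsum_nonneg) (auto simp: is_channel_def is_dist_def)

lemma bdd_above_mutual_info:
  assumes "finite A" and "is_channel W A B"
  shows "bdd_above {mutual_info W p A B | p. is_dist p A}"
  using channel_input.mutual_info_le_card[of W A B] assms
  by (intro bdd_aboveI[of _ "real (4 * card A)"]) (auto simp: channel_input_def)

lemma mutual_info_le_max_info:
  assumes "finite A" and "is_channel W A B" and "is_dist p A"
  shows "mutual_info W p A B \<le> max_info W A B"
  unfolding max_info_def by (rule cSup_upper[OF _ bdd_above_mutual_info[OF assms(1,2)]]) (use assms(3) in auto)

lemma max_info_le_max_info_add: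
  assumes "finite A" and "A \<noteq> {}" and "is_channel W' A B'"
    and "\<And>p. is_dist p A \<Longrightarrow> mutual_info W p A B \<le> mutual_info W' p A B' + c"
  shows "max_info W A B \<le> max_info W' A B' + c"
  unfolding max_info_def[of W]
proof (rule cSup_least)
  show "{mutual_info W p A B | p. is_dist p A} \<noteq> {}"
    using assms(1,2) by (auto intro!: exI[of _ "\<lambda>_. 1 / card A"] simp: is_dist_def)
qed (use assms(4) mutual_info_le_max_info[OF assms(1,3)] in force)

section \<open>Merging outputs along the fibres of a map\<close>

locale fibred_channel =
  fixes A :: "'a set" and U :: "'a \<Rightarrow> 'y \<Rightarrow> real" and Y :: "'y set" and f :: "'y \<Rightarrow> 'z" and K :: nat
  assumes finite_A: "finite A" and A_nonempty: "A \<noteq> {}" and channel: "is_channel U A Y"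
    and finite_fibre: "\<And>z. finite {y\<in>Y. f y = z}" and card_fibre: "\<And>z. card {y\<in>Y. f y = z} \<le> K"
begin

abbreviation "V \<equiv> image_channel f Y U"
abbreviation "Z \<equiv> f ` Y"
abbreviation "fibre z \<equiv> {y\<in>Y. f y = z}"

lemma U_nonneg: "x \<in> A \<Longrightarrow> 0 \<le> U x y"
  using channel by (simp add: is_channel_def)

lemma U_has_sum: "x \<in> A \<Longrightarrow> (U x has_sum 1) Y"
  using channel by (simp add: is_channel_def)

lemma U_summable: "x \<in> A \<Longrightarrow> U x summable_on Y"
  using U_has_sum by (auto simp: summable_on_def)

lemma V_eq_sum: "V x z = sum (U x) (fibre z)"
  using finite_fibre by (simp add: image_channel_def)

lemma V_nonneg: "x \<in> A \<Longrightarrow> 0 \<le> V x z"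
  by (simp add: V_eq_sum sum_nonneg U_nonneg)

lemma U_le_V: "x \<in> A \<Longrightarrow> y \<in> Y \<Longrightarrow> U x y \<le> V x (f y)"
  unfolding V_eq_sum by (rule member_le_sum) (auto simp: U_nonneg finite_fibre)

lemma V_has_sum_preimage:
  assumes x: "x \<in> A" and S: "S \<subseteq> Z"
  shows "(V x has_sum infsum (U x) {y\<in>Y. f y \<in> S}) S"
proof -
  have "(U x has_sum infsum (U x) {y\<in>Y. f y \<in> S}) {y\<in>Y. f y \<in> S}"
    using summable_on_subset_banach[OF U_summable[OF x]] by auto
  then have "((\<lambda>z. sum (U x) {y \<in> {y\<in>Y. f y \<in> S}. f y = z}) has_sum infsum (U x) {y\<in>Y. f y \<in> S})
      (f ` {y\<in>Y. f y \<in> S})"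
    by (rule has_sum_sum_fibres) (auto intro: finite_subset[OF _ finite_fibre])
  moreover have "f ` {y\<in>Y. f y \<in> S} = S"
    using S by auto
  moreover have "sum (U x) {y \<in> {y\<in>Y. f y \<in> S}. f y = z} = V x z" if "z \<in> S" for z
  proof -
    have "{y \<in> {y\<in>Y. f y \<in> S}. f y = z} = fibre z" using that by auto
    then show ?thesis by (simp add: V_eq_sum)
  qed
  ultimately show ?thesis
    using has_sum_cong[of S "\<lambda>z. sum (U x) {y \<in> {y\<in>Y. f y \<in> S}. f y = z}" "V x"] by simp
qed

lemma infsum_V:
  "x \<in> A \<Longrightarrow> S \<subseteq> Z \<Longrightarrow> infsum (V x) S = infsum (U x) {y\<in>Y. f y \<in> S}"
  using V_has_sum_preimage infsumI by blast

lemma is_channel_V: "is_channel V A Z"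
  unfolding is_channel_def
proof (intro conjI ballI allI impI)
  show "countable Z" using channel by (simp add: is_channel_def)
  show "0 \<le> V x z" if "x \<in> A" for x z using that by (rule V_nonneg)
  show "V x z = 0" if "z \<notin> Z" for x z
  proof -
    have "fibre z = {}" using that by auto
    then show ?thesis by (simp only: V_eq_sum sum.empty)
  qed
  show "(V x has_sum 1) Z" if "x \<in> A" for x
  proof -
    have "{y\<in>Y. f y \<in> Z} = Y" by auto
    then show ?thesis
      using V_has_sum_preimage[OF that order_refl] U_has_sum[OF that] by (simp add: infsumI)
  qed
qed

lemma V_has_sum: "x \<in> A \<Longrightarrow> (V x has_sum 1) Z"
  using is_channel_V by (simp add: is_channel_def)

lemma K_pos: "0 < K"
proof -
  obtain x where "x \<in> A" using A_nonempty by blast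
  then have "Y \<noteq> {}"
    using U_has_sum has_sum_unique[OF has_sum_empty[of "U x"], of 1] by auto
  then obtain y where "y \<in> Y" by blast
  then have "0 < card (fibre (f y))"
    using finite_fibre by (auto simp: card_gt_0_iff)
  then show ?thesis using card_fibre[of "f y"] by linarith
qed

lemma has_sum_regroup_fibres:
  fixes g :: "'a \<times> 'y \<Rightarrow> real"
  assumes "(g has_sum s) (A \<times> Y)"
  shows "((\<lambda>z. \<Sum>x\<in>A. \<Sum>y\<in>fibre z. g (x, y)) has_sum s) Z"
proof -
  have fibre: "{q \<in> A \<times> Y. f (snd q) = z} = A \<times> fibre z" for z by auto
  have "((\<lambda>z. sum g {q \<in> A \<times> Y. f (snd q) = z}) has_sum s) ((\<lambda>q. f (snd q)) ` (A \<times> Y))"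
    by (rule has_sum_sum_fibres[OF assms]) (simp add: fibre finite_A finite_fibre)
  moreover have "(\<lambda>q. f (snd q)) ` (A \<times> Y) = Z"
    using A_nonempty by (auto simp: image_iff)
  ultimately show ?thesis
    by (simp add: fibre sum.cartesian_product')
qed

lemma has_sum_regroup_outputs:
  fixes g :: "'a \<times> 'z \<Rightarrow> real"
  assumes "(g has_sum s) (A \<times> Z)"
  shows "((\<lambda>z. \<Sum>x\<in>A. g (x, z)) has_sum s) Z"
proof -
  have fibre: "{q \<in> A \<times> Z. snd q = z} = (\<lambda>x. (x, z)) ` A" if "z \<in> Z" for z
    using that by auto
  have "snd ` (A \<times> Z) = Z"
    using A_nonempty by (auto simp: image_iff)
  moreover have "finite {q \<in> A \<times> Z. snd q = z}" for z
    by (rule finite_subset[of _ "A \<times> {z}"]) (auto simp: finite_A)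
  ultimately have "((\<lambda>z. sum g {q \<in> A \<times> Z. snd q = z}) has_sum s) Z"
    using has_sum_sum_fibres[OF assms, of snd] by simp
  moreover have "sum g {q \<in> A \<times> Z. snd q = z} = (\<Sum>x\<in>A. g (x, z))" if "z \<in> Z" for z
    unfolding fibre[OF that] by (simp add: sum.reindex inj_on_def)
  ultimately show ?thesis
    using has_sum_cong[of Z "\<lambda>z. sum g {q \<in> A \<times> Z. snd q = z}" "\<lambda>z. \<Sum>x\<in>A. g (x, z)"] by simp
qed

context
  fixes p :: "'a \<Rightarrow> real"
  assumes dist: "is_dist p A"
begin

interpretation U: channel_input U A Y p
  using finite_A channel dist by unfold_locales

interpretation V: channel_input V A Z p
  using finite_A is_channel_V dist by unfold_locales

abbreviation "qU \<equiv> out_dist U p A"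
abbreviation "qV \<equiv> out_dist V p A"

lemma out_dist_V: "qV z = sum qU (fibre z)"
proof -
  have "qV z = (\<Sum>x\<in>A. \<Sum>y\<in>fibre z. p x * U x y)"
    by (simp add: out_dist_def V_eq_sum sum_distrib_left)
  also have "\<dots> = sum qU (fibre z)"
    by (subst sum.swap) (simp add: out_dist_def)
  finally show ?thesis .
qed

lemma qU_le_qV: "y \<in> Y \<Longrightarrow> qU y \<le> qV (f y)"
  unfolding out_dist_V by (rule member_le_sum) (auto simp: finite_fibre U.out_dist_nonneg)

lemma info_dens_diff:
  assumes x: "x \<in> A" and y: "y \<in> Y" and pos: "0 < p x * U x y"
  shows "0 < U x y" and "0 < qU y" and "0 < V x (f y)" and "0 < qV (f y)"
    and "info_dens U p A x y - info_dens V p A x (f y)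
      = log 2 (U x y / V x (f y)) - log 2 (qU y / qV (f y))"
proof -
  have U: "0 < U x y"
    using pos U.p_nonneg[OF x] U_nonneg[OF x, of y] by (auto simp: zero_less_mult_iff)
  moreover have qU: "0 < qU y"
    using pos U.mult_le_out_dist[OF x, of y] by linarith
  moreover have V: "0 < V x (f y)"
    using U U_le_V[OF x y] by linarith
  moreover have qV: "0 < qV (f y)"
    using qU qU_le_qV[OF y] by linarith
  ultimately show "0 < U x y" "0 < qU y" "0 < V x (f y)" "0 < qV (f y)"
    and "info_dens U p A x y - info_dens V p A x (f y)
      = log 2 (U x y / V x (f y)) - log 2 (qU y / qV (f y))"
    by (simp_all add: info_dens_def log_divide)
qed

lemma info_loss_term_lower:
  assumes x: "x \<in> A" and y: "y \<in> fibre z"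
  shows "p x * U x y - p x * V x z * qU y / qV z
    \<le> p x * U x y * (info_dens U p A x y - info_dens V p A x z) * ln 2"
proof (cases "0 < p x * U x y")
  case False
  then have "p x * U x y = 0"
    using U.p_nonneg[OF x] U_nonneg[OF x, of y] by (simp add: zero_less_mult_iff less_le)
  then show ?thesis
    unfolding \<open>p x * U x y = 0\<close>
    using U.p_nonneg[OF x] V_nonneg[OF x] U.out_dist_nonneg V.out_dist_nonneg by simp
next
  case True
  note pos = info_dens_diff[OF x _ True] and fy = CollectD[OF y]
  define r where "r = V x z * qU y / (U x y * qV z)"
  have "0 < r" using pos fy by (simp add: r_def)
  have "info_dens U p A x y - info_dens V p A x z = log 2 (U x y / V x z) - log 2 (qU y / qV z)"
    using pos fy by auto
  then have "(info_dens U p A x y - info_dens V p A x z) * ln 2 = ln (U x y / V x z) - ln (qU y / qV z)"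
    by (simp add: log_def diff_divide_distrib[symmetric])
  also have "\<dots> = - ln r"
    using pos fy by (simp add: r_def ln_div ln_mult)
  finally have "1 - r \<le> (info_dens U p A x y - info_dens V p A x z) * ln 2"
    using ln_le_minus_one[OF \<open>0 < r\<close>] by simp
  then have "p x * U x y * (1 - r) \<le> p x * U x y * ((info_dens U p A x y - info_dens V p A x z) * ln 2)"
    using True by (intro mult_left_mono) auto
  moreover have "p x * U x y * (1 - r) = p x * U x y - p x * V x z * qU y / qV z"
    using pos fy by (simp add: r_def field_simps)
  ultimately show ?thesis by (simp add: mult.assoc)
qed

lemma info_loss_term_upper:
  assumes x: "x \<in> A" and y: "y \<in> fibre z"
  shows "p x * U x y * (info_dens U p A x y - info_dens V p A x z) \<le> p x * U x y * log 2 (qV z / qU y)"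
proof (cases "0 < p x * U x y")
  case False
  then have "p x * U x y = 0"
    using U.p_nonneg[OF x] U_nonneg[OF x, of y] by (simp add: zero_less_mult_iff less_le)
  then show ?thesis
    unfolding \<open>p x * U x y = 0\<close> by simp
next
  case True
  note pos = info_dens_diff[OF x _ True] and fy = CollectD[OF y]
  have "log 2 (U x y / V x z) \<le> 0"
    using pos fy U_le_V[OF x, of y] by (simp add: log_divide)
  then have "info_dens U p A x y - info_dens V p A x z \<le> log 2 (qV z / qU y)"
    using pos fy by (simp add: log_divide)
  then show ?thesis
    using True by (intro mult_left_mono) auto
qed

lemma info_loss_fibre_nonneg:
  "0 \<le> (\<Sum>x\<in>A. \<Sum>y\<in>fibre z. p x * U x y * (info_dens U p A x y - info_dens V p A x z))"
proof -
  have "(\<Sum>x\<in>A. \<Sum>y\<in>fibre z. p x * V x z * qU y / qV z) = (\<Sum>x\<in>A. p x * V x z * sum qU (fibre z) / qV z)"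
    by (intro sum.cong refl) (simp add: sum_distrib_left sum_divide_distrib)
  also have "\<dots> = (\<Sum>x\<in>A. p x * V x z) * qV z / qV z"
    by (simp add: out_dist_V[symmetric] sum_distrib_right sum_divide_distrib)
  finally have "(\<Sum>x\<in>A. \<Sum>y\<in>fibre z. p x * V x z * qU y / qV z) = qV z * qV z / qV z"
    by (simp add: out_dist_def)
  moreover have "(\<Sum>x\<in>A. \<Sum>y\<in>fibre z. p x * U x y) = qV z"
    by (simp add: out_dist_def V_eq_sum sum_distrib_left)
  ultimately have "(\<Sum>x\<in>A. \<Sum>y\<in>fibre z. p x * U x y - p x * V x z * qU y / qV z)
      = qV z - qV z * qV z / qV z"
    by (simp add: sum_subtractf)
  also have "\<dots> \<ge> 0" by (cases "qV z = 0") auto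
  moreover have "(\<Sum>x\<in>A. \<Sum>y\<in>fibre z. p x * U x y - p x * V x z * qU y / qV z)
      \<le> (\<Sum>x\<in>A. \<Sum>y\<in>fibre z. p x * U x y * (info_dens U p A x y - info_dens V p A x z)) * ln 2"
    unfolding sum_distrib_right by (intro sum_mono info_loss_term_lower)
  ultimately show ?thesis
    by (simp add: zero_le_mult_iff)
qed

lemma info_loss_fibre_le:
  assumes z: "z \<in> Z"
  shows "(\<Sum>x\<in>A. \<Sum>y\<in>fibre z. p x * U x y * (info_dens U p A x y - info_dens V p A x z))
    \<le> qV z * log 2 K"
proof -
  have "(\<Sum>x\<in>A. \<Sum>y\<in>fibre z. p x * U x y * (info_dens U p A x y - info_dens V p A x z))
      \<le> (\<Sum>y\<in>fibre z. \<Sum>x\<in>A. p x * U x y * log 2 (qV z / qU y))"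
    by (subst sum.swap) (intro sum_mono info_loss_term_upper; simp)
  also have "\<dots> = (\<Sum>y\<in>fibre z. qU y * log 2 (sum qU (fibre z) / qU y))"
    unfolding out_dist_V[symmetric] by (simp add: out_dist_def[of U] sum_distrib_right)
  also have "\<dots> \<le> qV z * log 2 (card (fibre z))"
    using entropy_le_log_card[of "fibre z" qU] finite_fibre by (simp add: U.out_dist_nonneg out_dist_V)
  also have "\<dots> \<le> qV z * log 2 K"
  proof -
    have "0 < card (fibre z)"
      using z finite_fibre[of z] by (auto simp: card_gt_0_iff)
    then show ?thesis
      using card_fibre[of z] V.out_dist_nonneg[of z] by (intro mult_left_mono) auto
  qed
  finally show ?thesis .
qed

lemma mutual_info_image_bounds:
  shows "0 \<le> mutual_info U p A Y - mutual_info V p A Z"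
    and "mutual_info U p A Y - mutual_info V p A Z \<le> log 2 K"
proof -
  have "((\<lambda>z. \<Sum>x\<in>A. \<Sum>y\<in>fibre z. p x * U x y * info_dens U p A x y) has_sum mutual_info U p A Y) Z"
    using has_sum_regroup_fibres[OF U.mutual_info_summable[unfolded summable_iff_has_sum_infsum]]
    by (simp add: mutual_info_def)
  moreover have "((\<lambda>z. \<Sum>x\<in>A. p x * V x z * info_dens V p A x z) has_sum mutual_info V p A Z) Z"
    using has_sum_regroup_outputs[OF V.mutual_info_summable[unfolded summable_iff_has_sum_infsum]]
    by (simp add: mutual_info_def)
  moreover have "(\<Sum>x\<in>A. p x * V x z * info_dens V p A x z)
      = (\<Sum>x\<in>A. \<Sum>y\<in>fibre z. p x * U x y * info_dens V p A x z)" for z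
    by (simp add: V_eq_sum sum_distrib_left sum_distrib_right)
  ultimately have loss: "((\<lambda>z. \<Sum>x\<in>A. \<Sum>y\<in>fibre z. p x * U x y * (info_dens U p A x y - info_dens V p A x z))
      has_sum (mutual_info U p A Y - mutual_info V p A Z)) Z"
    using has_sum_diff by (simp add: right_diff_distrib sum_subtractf)
  show "0 \<le> mutual_info U p A Y - mutual_info V p A Z"
    by (rule has_sum_nonneg[OF loss info_loss_fibre_nonneg])
  show "mutual_info U p A Y - mutual_info V p A Z \<le> log 2 K"
    using has_sum_mono[OF loss has_sum_cmult_left[OF V.out_dist_has_sum] info_loss_fibre_le] by simp
qed

lemma infsum_joint_image:
  "infsum (\<lambda>(x, y). p x * U x y) {(x, y)\<in>A \<times> Y. P x (f y)}
    = infsum (\<lambda>(x, z). p x * V x z) {(x, z)\<in>A \<times> Z. P x z}"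
proof -
  let ?EU = "{(x, y)\<in>A \<times> Y. P x (f y)}" and ?EV = "{(x, z)\<in>A \<times> Z. P x z}"
  let ?wU = "\<lambda>(x, y). p x * U x y" and ?wV = "\<lambda>(x, z). p x * V x z"
  let ?gU = "\<lambda>z. \<Sum>x\<in>A. \<Sum>y\<in>fibre z. if (x, y) \<in> ?EU then ?wU (x, y) else 0"
  let ?gV = "\<lambda>z. \<Sum>x\<in>A. if (x, z) \<in> ?EV then ?wV (x, z) else 0"
  have "?EU \<subseteq> A \<times> Y" and "?EV \<subseteq> A \<times> Z" by auto
  have gU: "(?gU has_sum infsum ?wU ?EU) Z"
    by (rule has_sum_regroup_fibres[OF has_sum_restrict[OF has_sum_imp_summable[OF U.joint_has_sum] \<open>?EU \<subseteq> A \<times> Y\<close>]])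
  have gV: "(?gV has_sum infsum ?wV ?EV) Z"
    by (rule has_sum_regroup_outputs[OF has_sum_restrict[OF has_sum_imp_summable[OF V.joint_has_sum] \<open>?EV \<subseteq> A \<times> Z\<close>]])
  have "?gU z = ?gV z" if "z \<in> Z" for z
  proof (rule sum.cong[OF refl])
    fix x assume "x \<in> A"
    have "(\<Sum>y\<in>fibre z. if (x, y) \<in> ?EU then ?wU (x, y) else 0) = (\<Sum>y\<in>fibre z. if P x z then p x * U x y else 0)"
      using \<open>x \<in> A\<close> by (intro sum.cong refl) auto
    then show "(\<Sum>y\<in>fibre z. if (x, y) \<in> ?EU then ?wU (x, y) else 0) = (if (x, z) \<in> ?EV then ?wV (x, z) else 0)"
      using \<open>x \<in> A\<close> that by (simp add: V_eq_sum sum_distrib_left)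
  qed
  then have "(?gV has_sum infsum ?wU ?EU) Z"
    by (rule has_sum_cong[THEN iffD1, OF _ gU])
  then show ?thesis
    using gV by (rule has_sum_unique)
qed

lemma info_dens_gap_term_le:
  assumes x: "x \<in> A" and y: "y \<in> fibre z"
  shows "(if t < \<bar>info_dens U p A x y - info_dens V p A x z\<bar> then p x * U x y else 0)
    \<le> (if qU y < qV z * 2 powr - t then p x * U x y else 0)
      + p x * (if U x y < V x z * 2 powr - t then U x y else 0)"
proof (cases "0 < p x * U x y")
  case False
  then show ?thesis
    using U.p_nonneg[OF x] U_nonneg[OF x, of y] by (auto simp: zero_less_mult_iff less_le)
next
  case True
  note pos = info_dens_diff[OF x _ True] and fy = CollectD[OF y]
  have a: "log 2 (U x y / V x z) \<le> 0" and b: "log 2 (qU y / qV z) \<le> 0"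
    using pos fy U_le_V[OF x, of y] qU_le_qV[of y] by (simp_all add: log_divide)
  have diff: "info_dens U p A x y - info_dens V p A x z = log 2 (U x y / V x z) - log 2 (qU y / qV z)"
    using pos fy by auto
  show ?thesis
  proof (cases "t < \<bar>info_dens U p A x y - info_dens V p A x z\<bar>")
    case True
    then consider "t < info_dens U p A x y - info_dens V p A x z"
      | "info_dens U p A x y - info_dens V p A x z < - t"
      by (cases "0 \<le> info_dens U p A x y - info_dens V p A x z") auto
    \<comment> \<open>so \<open>y\<close> carries less than a \<open>2 powr - t\<close> share of its fibre's mass under \<open>qU\<close> or under \<open>U x\<close>\<close>
    then have "log 2 (qU y / qV z) < - t \<or> log 2 (U x y / V x z) < - t"
      by cases (use a b diff in linarith)+
    then show ?thesis
      using pos fy U.p_nonneg[OF x] by (auto simp: log_div_less_neg_iff)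
  qed (use U.p_nonneg[OF x] U_nonneg[OF x, of y] in auto)
qed

lemma info_dens_gap_fibre:
  "(\<Sum>x\<in>A. \<Sum>y\<in>fibre z. if t < \<bar>info_dens U p A x y - info_dens V p A x z\<bar> then p x * U x y else 0)
    \<le> 2 * K * 2 powr - t * qV z"
proof -
  define c where "c = 2 powr - t"
  have "(\<Sum>x\<in>A. \<Sum>y\<in>fibre z. if t < \<bar>info_dens U p A x y - info_dens V p A x z\<bar> then p x * U x y else 0)
      \<le> (\<Sum>x\<in>A. \<Sum>y\<in>fibre z. (if qU y < qV z * c then p x * U x y else 0)
          + p x * (if U x y < V x z * c then U x y else 0))"
    unfolding c_def by (intro sum_mono info_dens_gap_term_le)
  also have "\<dots> = (\<Sum>y\<in>fibre z. \<Sum>x\<in>A. if qU y < qV z * c then p x * U x y else 0)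
      + (\<Sum>x\<in>A. p x * (\<Sum>y\<in>fibre z. if U x y < V x z * c then U x y else 0))"
    by (simp add: sum.distrib sum_distrib_left sum.swap[of _ A "fibre z"])
  also have "(\<Sum>y\<in>fibre z. \<Sum>x\<in>A. if qU y < qV z * c then p x * U x y else 0)
      = (\<Sum>y\<in>fibre z. if qU y < qV z * c then qU y else 0)"
    by (intro sum.cong refl) (auto simp: out_dist_def[of U])
  also have "\<dots> \<le> K * (qV z * c)"
    using card_fibre V.out_dist_nonneg by (intro sum_if_less_le) (auto simp: c_def)
  also have "(\<Sum>x\<in>A. p x * (\<Sum>y\<in>fibre z. if U x y < V x z * c then U x y else 0))
      \<le> (\<Sum>x\<in>A. p x * (K * (V x z * c)))"
    using card_fibre V_nonneg U.p_nonneg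
    by (intro sum_mono mult_left_mono sum_if_less_le) (auto simp: c_def)
  also have "(\<Sum>x\<in>A. p x * (K * (V x z * c))) = K * (qV z * c)"
    by (simp add: out_dist_def sum_distrib_left sum_distrib_right mult_ac)
  finally show ?thesis by (simp add: c_def)
qed

lemma info_dens_gap_le:
  "infsum (\<lambda>(x, y). p x * U x y) {(x, y)\<in>A \<times> Y. t < \<bar>info_dens U p A x y - info_dens V p A x (f y)\<bar>}
    \<le> 2 * K * 2 powr - t"
proof -
  let ?E = "{(x, y)\<in>A \<times> Y. t < \<bar>info_dens U p A x y - info_dens V p A x (f y)\<bar>}"
  have "((\<lambda>z. \<Sum>x\<in>A. \<Sum>y\<in>fibre z. if (x, y) \<in> ?E then p x * U x y else 0)
      has_sum infsum (\<lambda>(x, y). p x * U x y) ?E) Z"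
    using has_sum_regroup_fibres[OF has_sum_restrict[OF has_sum_imp_summable[OF U.joint_has_sum], of ?E]]
    by auto
  moreover have "(\<Sum>x\<in>A. \<Sum>y\<in>fibre z. if (x, y) \<in> ?E then p x * U x y else 0)
      = (\<Sum>x\<in>A. \<Sum>y\<in>fibre z. if t < \<bar>info_dens U p A x y - info_dens V p A x z\<bar> then p x * U x y else 0)" for z
    by (intro sum.cong refl) auto
  ultimately show ?thesis
    using has_sum_mono[OF _ has_sum_cmult_right[OF V.out_dist_has_sum, of "2 * K * 2 powr - t"]
        info_dens_gap_fibre] by simp
qed

lemma info_dev_prob_le_image:
  assumes "0 < N"
  shows "info_dev_prob U p A Y N c \<delta> \<le> info_dev_prob V p A Z N c (\<delta> / 2) + 2 * K * 2 powr - (N * (\<delta> / 2))"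
proof -
  have "info_dev_prob U p A Y N c \<delta>
      \<le> infsum (\<lambda>(x, y). p x * U x y) {(x, y)\<in>A \<times> Y. \<delta> / 2 < \<bar>info_dens V p A x (f y) / N - c\<bar>}
        + infsum (\<lambda>(x, y). p x * U x y) {(x, y)\<in>A \<times> Y. N * (\<delta> / 2) < \<bar>info_dens U p A x y - info_dens V p A x (f y)\<bar>}"
    unfolding info_dev_prob_def Collect_mem_Times_fst_snd
    by (rule infsum_deviation_le[OF has_sum_imp_summable[OF U.joint_has_sum] _ assms])
       (auto intro!: mult_nonneg_nonneg U.p_nonneg U_nonneg)
  then show ?thesis
    using info_dens_gap_le[of "N * (\<delta> / 2)"]
      infsum_joint_image[of "\<lambda>x z. \<delta> / 2 < \<bar>info_dens V p A x z / N - c\<bar>"]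
    unfolding info_dev_prob_def by simp
qed

lemma info_dev_prob_image_le:
  assumes "0 < N"
  shows "info_dev_prob V p A Z N c \<delta> \<le> info_dev_prob U p A Y N c (\<delta> / 2) + 2 * K * 2 powr - (N * (\<delta> / 2))"
proof -
  have "info_dev_prob V p A Z N c \<delta>
      = infsum (\<lambda>(x, y). p x * U x y) {(x, y)\<in>A \<times> Y. \<delta> < \<bar>info_dens V p A x (f y) / N - c\<bar>}"
    using infsum_joint_image[of "\<lambda>x z. \<delta> < \<bar>info_dens V p A x z / N - c\<bar>"]
    unfolding info_dev_prob_def by simp
  also have "\<dots> \<le> info_dev_prob U p A Y N c (\<delta> / 2)
      + infsum (\<lambda>(x, y). p x * U x y) {(x, y)\<in>A \<times> Y. N * (\<delta> / 2) < \<bar>info_dens V p A x (f y) - info_dens U p A x y\<bar>}"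
    unfolding info_dev_prob_def Collect_mem_Times_fst_snd
    by (rule infsum_deviation_le[OF has_sum_imp_summable[OF U.joint_has_sum] _ assms])
       (auto intro!: mult_nonneg_nonneg U.p_nonneg U_nonneg)
  finally show ?thesis
    using info_dens_gap_le[of "N * (\<delta> / 2)"] by (simp add: abs_minus_commute)
qed

end

end

section \<open>Codes\<close>

lemma coding_scheme_mono: "coding_scheme W A B M \<epsilon> \<Longrightarrow> \<epsilon> \<le> \<epsilon>' \<Longrightarrow> coding_scheme W A B M \<epsilon>'"
  unfolding coding_scheme_def by (meson order_trans)

lemma coding_scheme_card_le: "coding_scheme W A B M \<epsilon> \<Longrightarrow> finite A \<Longrightarrow> M \<le> card A"
  unfolding coding_scheme_def using card_inj_on_le[of _ "{..<M}" A] by fastforce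

lemma disjoint_family_on_expurgated:
  "disjoint_family_on (\<lambda>i. E i - (\<Union>j\<in>S - {i}. E j)) S"
  unfolding disjoint_family_on_def by blast

lemma coding_scheme_reindex:
  fixes x :: "'i \<Rightarrow> 'a" and R :: "'i \<Rightarrow> 'b set"
  assumes "finite S" and "M \<le> card S" and "inj_on x S" and "\<And>i. i \<in> S \<Longrightarrow> x i \<in> A \<and> R i \<subseteq> B"
    and "disjoint_family_on R S" and "\<And>i. i \<in> S \<Longrightarrow> infsum (W (x i)) (B - R i) \<le> \<epsilon>"
  shows "coding_scheme W A B M \<epsilon>"
proof -
  obtain e where e: "bij_betw e {0..<card S} S"
    using ex_bij_betw_nat_finite[OF assms(1)] by blast
  have e_in: "e k \<in> S" if "k < M" for k
    using e that assms(2) by (auto simp: bij_betw_def)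
  have e_inj: "inj_on e {..<M}"
    using e assms(2) by (auto simp: bij_betw_def intro: inj_on_subset)
  show ?thesis
    unfolding coding_scheme_def
  proof (intro exI[of _ "x \<circ> e"] exI[of _ "R \<circ> e"] conjI allI impI)
    show "inj_on (x \<circ> e) {..<M}"
      using e_inj e_in assms(3) by (auto simp: inj_on_def)
    show "disjoint_family_on (R \<circ> e) {..<M}"
      unfolding disjoint_family_on_def
    proof (intro ballI impI)
      fix k l assume "k \<in> {..<M}" and "l \<in> {..<M}" and "k \<noteq> l"
      then have "e k \<noteq> e l" and "e k \<in> S" and "e l \<in> S"
        using e_inj e_in by (auto dest: inj_onD)
      then show "(R \<circ> e) k \<inter> (R \<circ> e) l = {}"
        using assms(5) by (auto simp: disjoint_family_on_def)
    qed
  qed (use assms e_in in auto)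
qed

lemma expurgation_size_le:
  fixes K n :: nat and \<epsilon> R R' :: real
  assumes "0 < \<epsilon>" and "1 \<le> K" and "0 \<le> R'"
    and small: "4 * (8 / \<epsilon> + 1) * (K * 2 powr - (real n * (R - R'))) \<le> 1"
  shows "2 * nat \<lceil>8 * real K / \<epsilon>\<rceil> * nat \<lceil>2 powr (real n * R')\<rceil> \<le> nat \<lceil>2 powr (real n * R)\<rceil>"
proof -
  define T M' where "T = nat \<lceil>8 * real K / \<epsilon>\<rceil>" and "M' = nat \<lceil>2 powr (real n * R')\<rceil>"
  have "0 \<le> 8 * real K / \<epsilon>"
    using assms(1) by simp
  then have T: "real T \<le> 8 * real K / \<epsilon> + 1"
    unfolding T_def using ceiling_correct[of "8 * real K / \<epsilon>"] by simp
  have "1 \<le> 2 powr (real n * R')"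
    using assms(3) by (intro ge_one_powr_ge_zero) auto
  then have M': "real M' \<le> 2 * 2 powr (real n * R')"
    unfolding M'_def using ceiling_correct[of "2 powr (real n * R')"] by simp
  have "real (2 * T * M') = (2 * real T) * real M'"
    by simp
  also have "\<dots> \<le> (2 * (8 * real K / \<epsilon> + 1)) * (2 * 2 powr (real n * R'))"
    using T M' by (intro mult_mono) auto
  also have "\<dots> \<le> 4 * (8 / \<epsilon> + 1) * K * 2 powr (real n * R')"
    using assms(1,2) by (simp add: field_simps)
  also have "\<dots> = 4 * (8 / \<epsilon> + 1) * (K * 2 powr - (real n * (R - R'))) * 2 powr (real n * R)"
    by (simp add: powr_add[symmetric] algebra_simps)
  also have "\<dots> \<le> 2 powr (real n * R)"
    using mult_right_mono[OF small, of "2 powr (real n * R)"] by simp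
  also have "\<dots> \<le> real (nat \<lceil>2 powr (real n * R)\<rceil>)"
    by (rule real_nat_ceiling_ge)
  finally show ?thesis
    unfolding T_def M'_def by (simp only: of_nat_le_iff)
qed

context fibred_channel
begin

lemma coding_scheme_of_image:
  assumes "coding_scheme V A Z M \<epsilon>"
  shows "coding_scheme U A Y M \<epsilon>"
proof -
  obtain x :: "nat \<Rightarrow> 'a" and R :: "nat \<Rightarrow> 'z set" where inj: "inj_on x {..<M}"
    and xR: "\<forall>i<M. x i \<in> A \<and> R i \<subseteq> Z" and disj: "disjoint_family_on R {..<M}"
    and err: "\<forall>i<M. infsum (V (x i)) (Z - R i) \<le> \<epsilon>"
    using assms unfolding coding_scheme_def by blast
  show ?thesis
    unfolding coding_scheme_def
  proof (intro exI[of _ x] exI[of _ "\<lambda>i. {y\<in>Y. f y \<in> R i}"] conjI allI impI)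
    show "disjoint_family_on (\<lambda>i. {y\<in>Y. f y \<in> R i}) {..<M}"
      using disj by (auto simp: disjoint_family_on_def)
    fix i assume "i < M"
    have "Y - {y\<in>Y. f y \<in> R i} = {y\<in>Y. f y \<in> Z - R i}" by auto
    then have "infsum (U (x i)) (Y - {y\<in>Y. f y \<in> R i}) = infsum (V (x i)) (Z - R i)"
      using xR infsum_V[of "x i" "Z - R i"] \<open>i < M\<close> by simp
    then show "infsum (U (x i)) (Y - {y\<in>Y. f y \<in> R i}) \<le> \<epsilon>"
      using err \<open>i < M\<close> by simp
  qed (use inj xR in auto)
qed

lemma card_images_containing_le:
  assumes "\<And>j. j \<in> J \<Longrightarrow> R j \<subseteq> Y" and "disjoint_family_on R J"
  shows "card {j\<in>J. z \<in> f ` R j} \<le> K"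
proof -
  obtain g where g: "\<And>j. j \<in> {j\<in>J. z \<in> f ` R j} \<Longrightarrow> g j \<in> R j \<and> f (g j) = z"
    using bchoice[of "{j\<in>J. z \<in> f ` R j}" "\<lambda>j y. y \<in> R j \<and> f y = z"] by blast
  have "inj_on g {j\<in>J. z \<in> f ` R j}"
  proof (rule inj_onI)
    fix i j assume i: "i \<in> {j\<in>J. z \<in> f ` R j}" and j: "j \<in> {j\<in>J. z \<in> f ` R j}" and "g i = g j"
    then have "g i \<in> R i \<inter> R j"
      using g[OF i] g[OF j] by simp
    then show "i = j"
      using assms(2) i j by (auto simp: disjoint_family_on_def)
  qed
  moreover have "g ` {j\<in>J. z \<in> f ` R j} \<subseteq> fibre z"
    using g assms(1) by blast
  ultimately have "card {j\<in>J. z \<in> f ` R j} \<le> card (fibre z)"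
    using card_inj_on_le finite_fibre by blast
  then show ?thesis
    using card_fibre[of z] by linarith
qed

lemma sum_infsum_V_images_le:
  assumes x: "x \<in> A" and "finite J" and "\<And>j. j \<in> J \<Longrightarrow> R j \<subseteq> Y" and "disjoint_family_on R J"
  shows "(\<Sum>j\<in>J. infsum (V x) (f ` R j)) \<le> K"
proof -
  have "(\<Sum>j\<in>J. infsum (V x) (f ` R j)) \<le> K * infsum (V x) Z"
    using V_has_sum[OF x] V_nonneg[OF x] assms(2-4) card_images_containing_le[of J R]
    by (intro sum_infsum_le_overlap) (auto simp: summable_on_def)
  also have "infsum (V x) Z = 1"
    using V_has_sum[OF x] by (rule infsumI)
  finally show ?thesis by simp
qed

lemma infsum_V_compl_expurgated_le:
  assumes x: "x \<in> A" and "finite J" and "R i \<subseteq> Y" and R: "\<And>j. j \<in> J \<Longrightarrow> R j \<subseteq> Y"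
  shows "infsum (V x) (Z - (f ` R i - (\<Union>j\<in>J. f ` R j)))
    \<le> infsum (U x) (Y - R i) + (\<Sum>j\<in>J. infsum (V x) (f ` R j))"
proof -
  have summable: "V x summable_on Z"
    using V_has_sum[OF x] by (auto simp: summable_on_def)
  have images: "f ` R j \<subseteq> Z" if "j \<in> J" for j
    using R[OF that] by auto
  have "infsum (V x) (Z - (f ` R i - (\<Union>j\<in>J. f ` R j)))
      \<le> infsum (V x) (Z - f ` R i) + infsum (V x) (\<Union>j\<in>J. f ` R j)"
    using summable V_nonneg[OF x] images by (intro infsum_le_infsum_Un) (auto simp: image_subset_iff)
  also have "infsum (V x) (\<Union>j\<in>J. f ` R j) \<le> (\<Sum>j\<in>J. infsum (V x) (f ` R j))"
    using summable V_nonneg[OF x] images \<open>finite J\<close>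
    by (intro infsum_le_sum_infsum_cover) (auto simp: image_subset_iff)
  also have "infsum (V x) (Z - f ` R i) = infsum (U x) {y\<in>Y. f y \<in> Z - f ` R i}"
    using x by (intro infsum_V) auto
  also have "\<dots> \<le> infsum (U x) (Y - R i)"
    using U_summable[OF x] U_nonneg[OF x]
    by (intro infsum_mono_neutral summable_on_subset_banach[OF U_summable[OF x]]) auto
  finally show ?thesis by simp
qed

lemma coding_scheme_image_of:
  fixes M M' T :: nat
  assumes code: "coding_scheme U A Y M \<epsilon>" and "0 < T" and size: "2 * T * M' \<le> M"
  shows "coding_scheme V A Z M' (\<epsilon> + 4 * real K / real T)"
proof -
  obtain x :: "nat \<Rightarrow> 'a" and R :: "nat \<Rightarrow> 'y set" where inj: "inj_on x {..<M}"
    and xR: "\<forall>i<M. x i \<in> A \<and> R i \<subseteq> Y" and disj: "disjoint_family_on R {..<M}"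
    and err: "\<forall>i<M. infsum (U (x i)) (Y - R i) \<le> \<epsilon>"
    using code unfolding coding_scheme_def by blast
  \<comment> \<open>\<open>w i j\<close> is the probability that codeword \<open>i\<close> is confused with the image of decoding set \<open>j\<close>\<close>
  define w where "w i j = (if i < M \<and> j < M then infsum (V (x i)) (f ` R j) else 0)" for i j
  have w_nonneg: "0 \<le> w i j" for i j
    unfolding w_def using xR V_nonneg by (auto intro!: infsum_nonneg)
  have "(\<Sum>j\<in>{..<M}. w i j) \<le> K" if "i < M" for i
    using that xR disj sum_infsum_V_images_le[of "x i" "{..<M}" R] by (simp add: w_def)
  then obtain S where S: "S \<subseteq> {..<M}" and "M \<le> 2 * T * card S"
    and sparse: "\<forall>i\<in>S. real T * (\<Sum>j\<in>S - {i}. w i j) \<le> 4 * K"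
    using ex_large_sparse_subset[of "{..<M}" w K T] w_nonneg \<open>0 < T\<close> K_pos by auto
  then have "2 * T * M' \<le> 2 * T * card S"
    using size by linarith
  then have "M' \<le> card S"
    using \<open>0 < T\<close> by simp
  define D where "D i = f ` R i - (\<Union>j\<in>S - {i}. f ` R j)" for i
  show ?thesis
  proof (rule coding_scheme_reindex[of S M' x A D Z])
    show "finite S" using S finite_subset by blast
    show "inj_on x S" using inj S by (rule inj_on_subset)
    show "x i \<in> A \<and> D i \<subseteq> Z" if "i \<in> S" for i
      using that S xR by (auto simp: D_def)
    show "disjoint_family_on D S"
      unfolding D_def by (rule disjoint_family_on_expurgated)
    fix i assume "i \<in> S"
    then have i: "i < M" "x i \<in> A" using S xR by auto
    have "infsum (V (x i)) (Z - D i) \<le> infsum (U (x i)) (Y - R i) + (\<Sum>j\<in>S - {i}. w i j)"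
      using infsum_V_compl_expurgated_le[of "x i" "S - {i}" R i] \<open>finite S\<close> S xR i
      by (auto simp: D_def w_def subset_iff)
    also have "\<dots> \<le> \<epsilon> + 4 * real K / real T"
      using err sparse \<open>i \<in> S\<close> i(1) \<open>0 < T\<close> by (intro add_mono) (auto simp: pos_le_divide_eq mult.commute)
    finally show "infsum (V (x i)) (Z - D i) \<le> \<epsilon> + 4 * real K / real T" .
  qed fact
qed

lemma coding_scheme_image_rate:
  fixes n :: nat
  assumes code: "coding_scheme U A Y (nat \<lceil>2 powr (real n * R)\<rceil>) (\<epsilon> / 2)" and "0 < \<epsilon>" and "0 \<le> R'"
    and small: "4 * (8 / \<epsilon> + 1) * (K * 2 powr - (real n * (R - R'))) \<le> 1"
  shows "coding_scheme V A Z (nat \<lceil>2 powr (real n * R')\<rceil>) \<epsilon>"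
proof -
  \<comment> \<open>expurgate with \<open>T = \<lceil>8 K / \<epsilon>\<rceil>\<close>, so that the extra error \<open>4 K / T\<close> is at most \<open>\<epsilon> / 2\<close>\<close>
  define T where "T = nat \<lceil>8 * real K / \<epsilon>\<rceil>"
  have "8 * real K / \<epsilon> \<le> T"
    unfolding T_def by (rule real_nat_ceiling_ge)
  moreover have "0 < 8 * real K / \<epsilon>"
    using K_pos \<open>0 < \<epsilon>\<close> by simp
  ultimately have "0 < real T" by linarith
  then have "0 < T" and extra: "4 * real K / real T \<le> \<epsilon> / 2"
    using \<open>8 * real K / \<epsilon> \<le> T\<close> \<open>0 < \<epsilon>\<close> by (simp_all add: field_simps)
  have "2 * T * nat \<lceil>2 powr (real n * R')\<rceil> \<le> nat \<lceil>2 powr (real n * R)\<rceil>"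
    unfolding T_def using \<open>0 < \<epsilon>\<close> K_pos \<open>0 \<le> R'\<close> small
    by (intro expurgation_size_le) auto
  with \<open>0 < T\<close> have "coding_scheme V A Z (nat \<lceil>2 powr (real n * R')\<rceil>) (\<epsilon> / 2 + 4 * real K / real T)"
    by (rule coding_scheme_image_of[OF code])
  then show ?thesis
    by (rule coding_scheme_mono) (use extra in linarith)
qed

end

section \<open>Channel sequences\<close>

lemma finite_inputs: "finite (inputs n :: 'x::finite list set)"
  using finite_lists_length_eq[of "UNIV :: 'x set" n] by (simp add: inputs_def)

lemma card_inputs: "card (inputs n :: 'x::finite list set) = CARD('x) ^ n"
  using card_lists_length_eq[of "UNIV :: 'x set" n] by (simp add: inputs_def)

lemma inputs_nonempty: "inputs n \<noteq> {}"
  unfolding inputs_def by (metis empty_iff length_replicate mem_Collect_eq)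

lemma achievable_zero: "achievable W B 0"
  unfolding achievable_def
proof (intro conjI allI impI exI)
  fix \<epsilon> :: real and n :: nat
  assume "0 < \<epsilon>"
  show "coding_scheme (W n) (inputs n) (B n) (nat \<lceil>2 powr (real n * 0)\<rceil>) \<epsilon>"
    unfolding coding_scheme_def
    by (rule exI[of _ "\<lambda>_. replicate n undefined"], rule exI[of _ "\<lambda>_. B n"])
       (use \<open>0 < \<epsilon>\<close> in \<open>auto simp: inputs_def disjoint_family_on_def inj_on_def\<close>)
qed auto

lemma achievable_le_log_card:
  fixes W :: "nat \<Rightarrow> ('x::finite) list \<Rightarrow> 'b \<Rightarrow> real"
  assumes "achievable W B R"
  shows "R \<le> log 2 CARD('x)"
proof -
  obtain n0 where n0: "\<forall>n\<ge>n0. coding_scheme (W n) (inputs n) (B n) (nat \<lceil>2 powr (real n * R)\<rceil>) 1"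
    using assms unfolding achievable_def by (meson zero_less_one)
  define n where "n = Suc n0"
  have "n0 \<le> n" and "0 < n" by (simp_all add: n_def)
  have "nat \<lceil>2 powr (real n * R)\<rceil> \<le> card (inputs n :: 'x list set)"
    using coding_scheme_card_le[OF n0[rule_format, OF \<open>n0 \<le> n\<close>] finite_inputs] .
  then have "2 powr (real n * R) \<le> real CARD('x) powr real n"
    by (simp add: card_inputs powr_realpow)
  also have "\<dots> = 2 powr (real n * log 2 CARD('x))"
    by (simp add: powr_def log_def)
  finally show ?thesis
    using \<open>0 < n\<close> by simp
qed

lemma capacity_eqI:
  fixes U :: "nat \<Rightarrow> ('x::finite) list \<Rightarrow> 'b \<Rightarrow> real" and V :: "nat \<Rightarrow> 'x list \<Rightarrow> 'c \<Rightarrow> real"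
  assumes sub: "\<And>R. achievable V C R \<Longrightarrow> achievable U B R"
    and approx: "\<And>R R'. achievable U B R \<Longrightarrow> 0 \<le> R' \<Longrightarrow> R' < R \<Longrightarrow> achievable V C R'"
  shows "capacity U B = capacity V C"
proof -
  let ?AU = "{R. achievable U B R}" and ?AV = "{R. achievable V C R}"
  have bdd: "bdd_above ?AU" "bdd_above ?AV"
    by (auto intro!: bdd_aboveI achievable_le_log_card)
  have zero: "0 \<in> ?AU" "0 \<in> ?AV"
    by (simp_all add: achievable_zero)
  have "Sup ?AU \<le> Sup ?AV"
  proof (rule cSup_least)
    fix R assume "R \<in> ?AU"
    then have "0 \<le> R" by (simp add: achievable_def)
    show "R \<le> Sup ?AV"
    proof (rule dense_le_bounded[of "- 1"])
      fix R' assume "- 1 < R'" and "R' < R"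
      show "R' \<le> Sup ?AV"
      proof (cases "0 \<le> R'")
        case True
        then show ?thesis
          using approx \<open>R \<in> ?AU\<close> \<open>R' < R\<close> by (intro cSup_upper bdd) auto
      next
        case False
        then show ?thesis
          using cSup_upper[OF zero(2) bdd(2)] by linarith
      qed
    qed (use \<open>0 \<le> R\<close> in simp)
  qed (use zero in blast)
  moreover have "Sup ?AV \<le> Sup ?AU"
    using sub zero bdd by (intro cSup_subset_mono) auto
  ultimately show ?thesis
    unfolding capacity_def by simp
qed

lemma tendsto_iff_diff_tendsto_0:
  fixes a b :: "nat \<Rightarrow> real"
  assumes "(\<lambda>n. a n - b n) \<longlonglongrightarrow> 0"
  shows "a \<longlonglongrightarrow> L \<longleftrightarrow> b \<longlonglongrightarrow> L"
proof
  assume "a \<longlonglongrightarrow> L"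
  from tendsto_diff[OF this assms] show "b \<longlonglongrightarrow> L" by simp
next
  assume "b \<longlonglongrightarrow> L"
  from tendsto_add[OF this assms] show "a \<longlonglongrightarrow> L" by simp
qed

lemma info_rate_eqI:
  fixes U :: "nat \<Rightarrow> 'x list \<Rightarrow> 'b \<Rightarrow> real" and V :: "nat \<Rightarrow> 'x list \<Rightarrow> 'c \<Rightarrow> real"
  assumes "(\<lambda>n. max_info (U n) (inputs n) (B n) / real n - max_info (V n) (inputs n) (C n) / real n)
    \<longlonglongrightarrow> 0"
  shows "info_rate_exists U B \<longleftrightarrow> info_rate_exists V C" and "info_rate U B = info_rate V C"
  using tendsto_iff_diff_tendsto_0[OF assms]
  by (simp_all add: info_rate_exists_def info_rate_def convergent_def lim_def)

lemma tendsto_subexp_mult_decay: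
  fixes K :: "nat \<Rightarrow> nat"
  assumes log_K: "(\<lambda>n. log 2 (K n) / real n) \<longlonglongrightarrow> 0"
    and K_pos: "\<forall>\<^sub>F n in sequentially. 0 < K n" and "0 < c"
  shows "(\<lambda>n. real (K n) * 2 powr - (real n * c)) \<longlonglongrightarrow> 0"
proof (rule tendsto_sandwich[of "\<lambda>_. 0" _ _ "\<lambda>n. (2 powr - (c / 2)) ^ n"])
  have "\<forall>\<^sub>F n in sequentially. log 2 (K n) / real n < c / 2"
    using \<open>0 < c\<close> by (intro order_tendstoD(2)[OF log_K]) simp
  then show "\<forall>\<^sub>F n in sequentially. real (K n) * 2 powr - (real n * c) \<le> (2 powr - (c / 2)) ^ n"
    using K_pos eventually_gt_at_top[of 0]
  proof eventually_elim
    case (elim n)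
    then have "log 2 (K n) \<le> real n * (c / 2)"
      by (simp add: divide_less_eq mult.commute)
    then have "real (K n) \<le> 2 powr (real n * (c / 2))"
      using elim log_le_iff[of 2 "real (K n)" "real n * (c / 2)"] by simp
    then have "real (K n) * 2 powr - (real n * c) \<le> 2 powr (real n * (c / 2)) * 2 powr - (real n * c)"
      by (rule mult_right_mono) simp
    also have "\<dots> = (2 powr - (c / 2)) ^ n"
      by (simp add: powr_add[symmetric] powr_realpow[symmetric] powr_powr)
    finally show ?case .
  qed
  have "(2 :: real) powr - (c / 2) < 2 powr 0"
    using \<open>0 < c\<close> by (intro powr_less_mono) auto
  then have "norm (2 powr - (c / 2) :: real) < 1"
    by simp
  then show "(\<lambda>n. (2 powr - (c / 2)) ^ n) \<longlonglongrightarrow> 0"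
    by (rule LIMSEQ_power_zero)
qed auto

lemma strictly_info_stable_iff_info_dev_prob:
  "strictly_info_stable V B \<longleftrightarrow> info_rate_exists V B \<and>
    (\<exists>p. (\<forall>n. is_dist (p n) (inputs n)) \<and>
      (\<forall>\<delta>>0. (\<lambda>n. info_dev_prob (V n) (p n) (inputs n) (B n) (real n) (info_rate V B) \<delta>) \<longlonglongrightarrow> 0))"
  by (simp add: strictly_info_stable_def info_dev_prob_def)

lemma strictly_info_stable_transfer:
  fixes U :: "nat \<Rightarrow> 'x list \<Rightarrow> 'b \<Rightarrow> real" and V :: "nat \<Rightarrow> 'x list \<Rightarrow> 'c \<Rightarrow> real"
    and e :: "nat \<Rightarrow> real \<Rightarrow> real"
  assumes "strictly_info_stable U B"
    and "info_rate_exists V C" and "info_rate V C = info_rate U B"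
    and "\<And>n. 1 \<le> n \<Longrightarrow> is_channel (V n) (inputs n) (C n)"
    and dev: "\<And>p n c \<delta>. is_dist p (inputs n) \<Longrightarrow> 1 \<le> n \<Longrightarrow>
      info_dev_prob (V n) p (inputs n) (C n) n c \<delta> \<le> info_dev_prob (U n) p (inputs n) (B n) n c (\<delta> / 2) + e n \<delta>"
    and e: "\<And>\<delta>. 0 < \<delta> \<Longrightarrow> (\<lambda>n. e n \<delta>) \<longlonglongrightarrow> 0"
  shows "strictly_info_stable V C"
proof -
  obtain p where p: "\<forall>n. is_dist (p n) (inputs n)"
    and lim: "\<forall>\<delta>>0. (\<lambda>n. info_dev_prob (U n) (p n) (inputs n) (B n) n (info_rate U B) \<delta>) \<longlonglongrightarrow> 0"
    using assms(1) unfolding strictly_info_stable_iff_info_dev_prob by blast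
  have "(\<lambda>n. info_dev_prob (V n) (p n) (inputs n) (C n) n (info_rate V C) \<delta>) \<longlonglongrightarrow> 0" if "0 < \<delta>" for \<delta>
  proof (rule tendsto_sandwich[OF _ _ tendsto_const])
    show "\<forall>\<^sub>F n in sequentially. 0 \<le> info_dev_prob (V n) (p n) (inputs n) (C n) n (info_rate V C) \<delta>"
      using eventually_ge_at_top[of 1] by eventually_elim (use assms(4) p in \<open>auto intro: info_dev_prob_nonneg\<close>)
    show "\<forall>\<^sub>F n in sequentially. info_dev_prob (V n) (p n) (inputs n) (C n) n (info_rate V C) \<delta>
        \<le> info_dev_prob (U n) (p n) (inputs n) (B n) n (info_rate U B) (\<delta> / 2) + e n \<delta>"
      using eventually_ge_at_top[of 1] by eventually_elim (use assms(3) dev p in auto)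
    show "(\<lambda>n. info_dev_prob (U n) (p n) (inputs n) (B n) n (info_rate U B) (\<delta> / 2) + e n \<delta>) \<longlonglongrightarrow> 0"
      using tendsto_add[OF lim[rule_format] e, of "\<delta> / 2" \<delta>] that by simp
  qed
  then show ?thesis
    unfolding strictly_info_stable_iff_info_dev_prob using assms(2) p by blast
qed

lemma fibred_channel_max_fibre:
  assumes "finite A" and "A \<noteq> {}" and "is_channel U A Y"
    and bounded: "\<exists>K::nat. \<forall>z. finite {y\<in>Y. f y = z} \<and> card {y\<in>Y. f y = z} \<le> K"
  shows "fibred_channel A U Y f (Max ((\<lambda>z. card {y\<in>Y. f y = z}) ` (f ` Y)))"
proof
  obtain K :: nat where K: "\<forall>z. finite {y\<in>Y. f y = z} \<and> card {y\<in>Y. f y = z} \<le> K"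
    using bounded by blast
  have "finite ((\<lambda>z. card {y\<in>Y. f y = z}) ` (f ` Y))"
    by (rule finite_subset[of _ "{..K}"]) (use K in auto)
  then show "card {y\<in>Y. f y = z} \<le> Max ((\<lambda>z. card {y\<in>Y. f y = z}) ` (f ` Y))" for z
  proof (cases "z \<in> f ` Y")
    case False
    then have "{y\<in>Y. f y = z} = {}" by auto
    then have "card {y\<in>Y. f y = z} = 0" by (simp only: card.empty)
    then show ?thesis by simp
  qed (auto intro: Max_ge)
  show "finite {y\<in>Y. f y = z}" for z
    using K by blast
qed (use assms in auto)

locale fibred_channel_seq =
  fixes U :: "nat \<Rightarrow> ('x::finite) list \<Rightarrow> 'y \<Rightarrow> real" and Y :: "nat \<Rightarrow> 'y set"
    and f :: "nat \<Rightarrow> 'y \<Rightarrow> 'z" and K :: "nat \<Rightarrow> nat"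
  assumes fibred: "\<And>n. 1 \<le> n \<Longrightarrow> fibred_channel (inputs n) (U n) (Y n) (f n) (K n)"
    and log_K: "(\<lambda>n. log 2 (K n) / real n) \<longlonglongrightarrow> 0"
begin

abbreviation "V \<equiv> \<lambda>n. image_channel (f n) (Y n) (U n)"
abbreviation "Z \<equiv> \<lambda>n. f n ` Y n"

lemma K_decay: "0 < c \<Longrightarrow> (\<lambda>n. real (K n) * 2 powr - (real n * c)) \<longlonglongrightarrow> 0"
proof (rule tendsto_subexp_mult_decay[OF log_K])
  show "\<forall>\<^sub>F n in sequentially. 0 < K n"
    using eventually_ge_at_top[of 1] by eventually_elim (rule fibred_channel.K_pos[OF fibred])
qed

lemma achievable_of_image:
  assumes "achievable V Z R"
  shows "achievable U Y R"
  unfolding achievable_def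
proof (intro conjI allI impI)
  show "0 \<le> R" using assms by (simp add: achievable_def)
  fix \<epsilon> :: real assume "0 < \<epsilon>"
  then obtain n0 where "\<forall>n\<ge>n0. coding_scheme (V n) (inputs n) (Z n) (nat \<lceil>2 powr (real n * R)\<rceil>) \<epsilon>"
    using assms unfolding achievable_def by blast
  then show "\<exists>n0. \<forall>n\<ge>n0. coding_scheme (U n) (inputs n) (Y n) (nat \<lceil>2 powr (real n * R)\<rceil>) \<epsilon>"
    by (intro exI[of _ "max n0 1"] allI impI fibred_channel.coding_scheme_of_image[OF fibred]) auto
qed

lemma achievable_image:
  assumes "achievable U Y R" and "0 \<le> R'" and "R' < R"
  shows "achievable V Z R'"
  unfolding achievable_def
proof (intro conjI allI impI)
  show "0 \<le> R'" by fact
  fix \<epsilon> :: real assume "0 < \<epsilon>"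
  then obtain n0 where n0: "\<forall>n\<ge>n0. coding_scheme (U n) (inputs n) (Y n) (nat \<lceil>2 powr (real n * R)\<rceil>) (\<epsilon> / 2)"
    using assms(1) unfolding achievable_def by (meson half_gt_zero)
  have "0 < R - R'" and "0 < 1 / (4 * (8 / \<epsilon> + 1))"
    using assms(3) \<open>0 < \<epsilon>\<close> by (simp_all add: add_pos_pos)
  from order_tendstoD(2)[OF K_decay[OF this(1)] this(2)]
  obtain n1 where n1: "\<forall>n\<ge>n1. real (K n) * 2 powr - (real n * (R - R')) < 1 / (4 * (8 / \<epsilon> + 1))"
    by (auto simp: eventually_sequentially)
  show "\<exists>n0. \<forall>n\<ge>n0. coding_scheme (V n) (inputs n) (Z n) (nat \<lceil>2 powr (real n * R')\<rceil>) \<epsilon>"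
  proof (intro exI[of _ "max (max n0 n1) 1"] allI impI)
    fix n assume "max (max n0 n1) 1 \<le> n"
    then have "n0 \<le> n" and "n1 \<le> n" and "1 \<le> n" by auto
    have "4 * (8 / \<epsilon> + 1) * (K n * 2 powr - (real n * (R - R'))) \<le> 1"
      using n1 \<open>n1 \<le> n\<close> \<open>0 < \<epsilon>\<close> by (auto simp: field_simps)
    then show "coding_scheme (V n) (inputs n) (Z n) (nat \<lceil>2 powr (real n * R')\<rceil>) \<epsilon>"
      using fibred_channel.coding_scheme_image_rate[OF fibred[OF \<open>1 \<le> n\<close>]] n0 \<open>n0 \<le> n\<close> \<open>0 < \<epsilon>\<close> assms(2)
      by blast
  qed
qed

lemma capacity_image: "capacity U Y = capacity V Z"
  by (rule capacity_eqI[OF achievable_of_image achievable_image])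

lemma info_rate_image:
  shows "info_rate_exists U Y \<longleftrightarrow> info_rate_exists V Z" and "info_rate U Y = info_rate V Z"
proof -
  let ?a = "\<lambda>n. max_info (U n) (inputs n) (Y n)" and ?b = "\<lambda>n. max_info (V n) (inputs n) (Z n)"
  have bounds: "?b n \<le> ?a n + 0 \<and> ?a n \<le> ?b n + log 2 (K n)" if "1 \<le> n" for n
  proof
    note bounds = fibred_channel.mutual_info_image_bounds[OF fibred[OF that]]
    show "?b n \<le> ?a n + 0"
      using bounds(1) fibred_channel.channel[OF fibred[OF that]]
      by (intro max_info_le_max_info_add[OF finite_inputs inputs_nonempty]) auto
    show "?a n \<le> ?b n + log 2 (K n)"
      using bounds(2) fibred_channel.is_channel_V[OF fibred[OF that]]
      by (intro max_info_le_max_info_add[OF finite_inputs inputs_nonempty]) (auto simp: algebra_simps)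
  qed
  have "(\<lambda>n. ?a n / real n - ?b n / real n) \<longlonglongrightarrow> 0"
  proof (rule tendsto_sandwich[OF _ _ tendsto_const log_K])
    show "\<forall>\<^sub>F n in sequentially. 0 \<le> ?a n / real n - ?b n / real n"
      using eventually_ge_at_top[of 1] by eventually_elim (use bounds in \<open>auto simp: divide_right_mono\<close>)
    show "\<forall>\<^sub>F n in sequentially. ?a n / real n - ?b n / real n \<le> log 2 (K n) / real n"
      using eventually_ge_at_top[of 1]
    proof eventually_elim
      case (elim n)
      then have "?a n - ?b n \<le> log 2 (K n)"
        using bounds by fastforce
      then show ?case
        using divide_right_mono[of "?a n - ?b n" "log 2 (K n)" "real n"] by (simp add: diff_divide_distrib)
    qed
  qed
  then show "info_rate_exists U Y \<longleftrightarrow> info_rate_exists V Z" and "info_rate U Y = info_rate V Z"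
    by (rule info_rate_eqI)+
qed

lemma K_error_tendsto_0: "0 < \<delta> \<Longrightarrow> (\<lambda>n. 2 * real (K n) * 2 powr - (real n * (\<delta> / 2))) \<longlonglongrightarrow> 0"
  using tendsto_mult_right_zero[OF K_decay[of "\<delta> / 2"], of 2] by (simp add: mult.assoc)

lemma strictly_info_stable_image_of:
  assumes "strictly_info_stable U Y"
  shows "strictly_info_stable V Z"
proof (rule strictly_info_stable_transfer[where e = "\<lambda>n \<delta>. 2 * real (K n) * 2 powr - (real n * (\<delta> / 2))"])
  show "info_rate_exists V Z" and "info_rate V Z = info_rate U Y"
    using assms info_rate_image by (simp_all add: strictly_info_stable_def)
  show "is_channel (V n) (inputs n) (Z n)" if "1 \<le> n" for n
    using fibred_channel.is_channel_V[OF fibred[OF that]] .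
  show "info_dev_prob (V n) p (inputs n) (Z n) (real n) c \<delta>
      \<le> info_dev_prob (U n) p (inputs n) (Y n) (real n) c (\<delta> / 2) + 2 * real (K n) * 2 powr - (real n * (\<delta> / 2))"
    if "is_dist p (inputs n)" and "1 \<le> n" for p n c \<delta>
    using fibred_channel.info_dev_prob_image_le[OF fibred[OF that(2)] that(1), of "real n" c \<delta>] that(2) by simp
qed (use assms K_error_tendsto_0 in auto)

lemma strictly_info_stable_of_image:
  assumes "strictly_info_stable V Z"
  shows "strictly_info_stable U Y"
proof (rule strictly_info_stable_transfer[where e = "\<lambda>n \<delta>. 2 * real (K n) * 2 powr - (real n * (\<delta> / 2))"])
  show "info_rate_exists U Y" and "info_rate U Y = info_rate V Z"
    using assms info_rate_image by (simp_all add: strictly_info_stable_def)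
  show "is_channel (U n) (inputs n) (Y n)" if "1 \<le> n" for n
    using fibred_channel.channel[OF fibred[OF that]] .
  show "info_dev_prob (U n) p (inputs n) (Y n) (real n) c \<delta>
      \<le> info_dev_prob (V n) p (inputs n) (Z n) (real n) c (\<delta> / 2) + 2 * real (K n) * 2 powr - (real n * (\<delta> / 2))"
    if "is_dist p (inputs n)" and "1 \<le> n" for p n c \<delta>
    using fibred_channel.info_dev_prob_le_image[OF fibred[OF that(2)] that(1), of "real n" c \<delta>] that(2) by simp
qed (use assms K_error_tendsto_0 in auto)

end

theorem proposition5:
  fixes U :: "nat \<Rightarrow> ('x::finite) list \<Rightarrow> 'y \<Rightarrow> real"
    and Y :: "nat \<Rightarrow> 'y set"
    and f :: "nat \<Rightarrow> 'y \<Rightarrow> 'z"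
    and V :: "nat \<Rightarrow> 'x list \<Rightarrow> 'z \<Rightarrow> real"
  assumes chan: "\<And>n. n \<ge> 1 \<Longrightarrow> is_channel (U n) (inputs n) (Y n)"
    and V_def: "\<And>n. V n = image_channel (f n) (Y n) (U n)"
    and fib: "\<And>n. \<exists>K::nat. \<forall>z. finite {y \<in> Y n. f n y = z} \<and> card {y \<in> Y n. f n y = z} \<le> K"
    and Phi_lim: "(\<lambda>n. Phi (f n) (Y n) / real n) \<longlonglongrightarrow> 0"
  shows "capacity U Y = capacity V (\<lambda>n. f n ` Y n)
    \<and> ((info_rate_exists U Y \<or> info_rate_exists V (\<lambda>n. f n ` Y n)) \<longrightarrow>
         info_rate_exists U Y \<and> info_rate_exists V (\<lambda>n. f n ` Y n) \<and>
         info_rate U Y = info_rate V (\<lambda>n. f n ` Y n))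
    \<and> (strictly_info_stable U Y \<longleftrightarrow> strictly_info_stable V (\<lambda>n. f n ` Y n))"
proof -
  define K where "K n = Max ((\<lambda>z. card {y\<in>Y n. f n y = z}) ` (f n ` Y n))" for n
  interpret fibred_channel_seq U Y f K
  proof (rule fibred_channel_seq.intro)
    show "fibred_channel (inputs n) (U n) (Y n) (f n) (K n)" if "1 \<le> n" for n
      unfolding K_def by (rule fibred_channel_max_fibre[OF finite_inputs inputs_nonempty chan[OF that] fib])
    show "(\<lambda>n. log 2 (K n) / real n) \<longlonglongrightarrow> 0"
      using Phi_lim by (simp add: Phi_def K_def)
  qed
  have "V = (\<lambda>n. image_channel (f n) (Y n) (U n))"
    using V_def by blast
  then show ?thesis
    using capacity_image info_rate_image strictly_info_stable_image_of strictly_info_stable_of_image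
    by blast
qed
end
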